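(* Let $v\equiv 1$ or $3 \pmod 6$, and for $i\ge 0$ let $\mathcal{D}_i$ denote the set of $(i+1)$-dimensional subspaces $D$ of $\mathrm{GF}(3)^v$ such that $D$ contains the all-one vector $(1,\ldots,1)$ and every vector of $D$ is orthogonal (over $\mathrm{GF}(3)$) to the characteristic vector of every block of at least one common Steiner triple system of order $v$ on $\{1,\ldots,v\}$. Let $i$ and $j$ be nonnegative integers with $i\le j$. If $\mathcal{D}_j$ is nonempty, then every subspace from $\mathcal{D}_i$ is contained in exactly $\Gamma_{v,i,j}$ subspaces from $\mathcal{D}_j$, where $$\Gamma_{v,i,j}=\left(\left(\tfrac{v}{3^i}\right)!\right)^{3^i}\Bigg/\left(3^{\frac{(j+i+1)(j-i)}{2}}\left(\left(\tfrac{v}{3^j}\right)!\right)^{3^j}2^{j-i}\,[j-i]_3!\right).$$ In particular, $|\mathcal{D}_j|=\Gamma_{v,0,j}$.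
   Context: A Steiner triple system STS$(v)$ on the point set $\{1,\ldots,v\}$ is a collection of 3-subsets (blocks) such that every 2-subset of $\{1,\ldots,v\}$ is contained in exactly one block. A block is identified with its characteristic vector in $\mathrm{GF}(3)^v$ (entries $1$ at the positions of its points, $0$ elsewhere). Vectors $x,y$ are orthogonal if $\sum_t x_ty_t=0$. The $q$-factorial is $[n]_q!=\prod_{s=1}^n\sum_{r=0}^{s-1}q^r$ (so $[0]_q!=1$). *)

theory Defs
  imports Complex_Main "HOL-Library.Numeral_Type"
begin

text \<open>GF(3) is the numeral type 3 (integers modulo 3, a commutative ring of
characteristic 3). A vector of GF(3)^v is a function nat => 3 whose support
lies in the coordinate set {1..v}.\<close>

type_synonym gf3vec = "nat \<Rightarrow> 3"

definition vecs :: "nat \<Rightarrow> gf3vec set" where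
  "vecs v = {x. \<forall>t. t \<notin> {1..v} \<longrightarrow> x t = 0}"

definition all_one :: "nat \<Rightarrow> gf3vec" where
  "all_one v = (\<lambda>t. if t \<in> {1..v} then 1 else 0)"

definition char_vec :: "nat set \<Rightarrow> gf3vec" where
  "char_vec B = (\<lambda>t. if t \<in> B then 1 else 0)"

definition orth :: "nat \<Rightarrow> gf3vec \<Rightarrow> gf3vec \<Rightarrow> bool" where
  "orth v x y \<longleftrightarrow> (\<Sum>t\<in>{1..v}. x t * y t) = 0"

definition subspace3 :: "nat \<Rightarrow> gf3vec set \<Rightarrow> bool" where
  "subspace3 v D \<longleftrightarrow> D \<subseteq> vecs v \<and> (\<lambda>t. 0) \<in> D \<and>
     (\<forall>x\<in>D. \<forall>y\<in>D. (\<lambda>t. x t + y t) \<in> D) \<and>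
     (\<forall>c::3. \<forall>x\<in>D. (\<lambda>t. c * x t) \<in> D)"

definition lin_indep3 :: "gf3vec set \<Rightarrow> bool" where
  "lin_indep3 B \<longleftrightarrow> finite B \<and>
     (\<forall>c::gf3vec \<Rightarrow> 3. (\<lambda>t. \<Sum>b\<in>B. c b * b t) = (\<lambda>t. 0) \<longrightarrow> (\<forall>b\<in>B. c b = 0))"

definition span3 :: "gf3vec set \<Rightarrow> gf3vec set" where
  "span3 B = {(\<lambda>t. \<Sum>b\<in>B. c b * b t) | c :: gf3vec \<Rightarrow> 3. True}"

definition subspace_dim :: "nat \<Rightarrow> gf3vec set \<Rightarrow> nat \<Rightarrow> bool" where
  "subspace_dim v D k \<longleftrightarrow> subspace3 v D \<and>
     (\<exists>B. B \<subseteq> D \<and> lin_indep3 B \<and> span3 B = D \<and> card B = k)"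

definition is_STS :: "nat \<Rightarrow> nat set set \<Rightarrow> bool" where
  "is_STS v S \<longleftrightarrow> (\<forall>b\<in>S. b \<subseteq> {1..v} \<and> card b = 3) \<and>
     (\<forall>P. P \<subseteq> {1..v} \<and> card P = 2 \<longrightarrow> (\<exists>!b. b \<in> S \<and> P \<subseteq> b))"

definition Dset :: "nat \<Rightarrow> nat \<Rightarrow> gf3vec set set" where
  "Dset v i = {D. subspace_dim v D (i + 1) \<and> all_one v \<in> D \<and>
     (\<exists>S. is_STS v S \<and> (\<forall>x\<in>D. \<forall>b\<in>S. orth v x (char_vec b)))}"

definition qfact :: "real \<Rightarrow> nat \<Rightarrow> real" where
  "qfact q n = (\<Prod>s=1..n. \<Sum>r<s. q ^ r)"

definition Gamma :: "nat \<Rightarrow> nat \<Rightarrow> nat \<Rightarrow> real" where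
  "Gamma v i j =
     (fact (v div 3 ^ i)) ^ (3 ^ i) /
     (3 ^ (((j + i + 1) * (j - i)) div 2) * (fact (v div 3 ^ j)) ^ (3 ^ j)
        * 2 ^ (j - i) * qfact 3 (j - i))"

end

theory Submission
  imports Defs "HOL-Library.FuncSet"
begin

(* A member of D_j is the span of the all-one vector and a frame z 0, ..., z (j-1); look at the
   fibres of the coordinate map t \<mapsto> (z 0 t, ..., z (j-1) t) on the points.  Orthogonality to a
   block {a, b, c} says z l a + z l b + z l c = 0.  With linear independence this forces every
   fibre to be nonempty, and for a fixed point a the map sending b to the third point of the
   block through a and b embeds any fibre into any other, so all fibres have size v / 3^j.
   Conversely, a frame whose fibres all have size v / 3^j is matched with the frame of a fixed
   member of D_j by a permutation of the points, and the permuted Steiner triple system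
   witnesses that its span lies in D_j.

   Now count pairs (E, z) with D \<subseteq> E \<in> D_j and z an extension of a fixed frame of D to a
   frame of E.  Each E has prod_{l=i}^{j-1} (3^(j+1) - 3^(l+1)) such extensions.  On the other
   hand z determines E, and the z that occur are exactly the extensions whose fibres all have
   size v / 3^j; these are counted level by level, since every fibre of size 3m splits evenly
   in (3m)! / (m!)^3 ways. *)

lemma UNIV_3: "(UNIV :: 3 set) = {0, 1, 2}"
proof -
  have "card {0::3, 1, 2} = CARD(3)" by simp
  then show ?thesis by (metis card_subset_eq finite subset_UNIV)
qed

lemma gf3_cases: "(x::3) = 0 \<or> x = 1 \<or> x = 2"
  using UNIV_3 by blast

lemma gf3_square_eq_1: "(a::3) \<noteq> 0 \<Longrightarrow> a * a = 1"
  using gf3_cases[of a] by auto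

lemma gf3_add_self3: "x + x + (x::3) = 0"
  using gf3_cases[of x] by auto

lemma gf3_minus_self2: "- x - x = (x::3)"
  using gf3_cases[of x] by auto

lemma gf3_third_eq_imp_eq: "- p - q = (q::3) \<Longrightarrow> p = q"
  using gf3_cases[of p] gf3_cases[of q] by auto

lemma gf3_UNIV_third:
  assumes "(a::3) \<noteq> b"
  shows "{a, b, - a - b} = UNIV"
proof -
  have "x \<in> {a, b, - a - b}" for x
    using gf3_cases[of a] gf3_cases[of b] gf3_cases[of x] assms by auto
  then show ?thesis by blast
qed

lemma add3_eq_0_iff: "(x::'a::ab_group_add) + y + w = 0 \<longleftrightarrow> w = - x - y"
  by (metis add.commute diff_minus_eq_add eq_neg_iff_add_eq_0 minus_diff_eq)

definition frame_span :: "nat \<Rightarrow> (nat \<Rightarrow> gf3vec) \<Rightarrow> nat \<Rightarrow> gf3vec set" where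
  "frame_span v z n = {(\<lambda>t. c0 * all_one v t + (\<Sum>l<n. c l * z l t)) | c0 c. True}"

definition frame_indep :: "nat \<Rightarrow> (nat \<Rightarrow> gf3vec) \<Rightarrow> nat \<Rightarrow> bool" where
  "frame_indep v z n \<longleftrightarrow> (\<forall>k<n. z k \<notin> frame_span v z k)"

definition frame_lin_indep :: "nat \<Rightarrow> (nat \<Rightarrow> gf3vec) \<Rightarrow> nat \<Rightarrow> bool" where
  "frame_lin_indep v z n \<longleftrightarrow>
     (\<forall>c0 c. (\<forall>t\<in>{1..v}. c0 + (\<Sum>l<n. c l * z l t) = 0) \<longrightarrow> c0 = 0 \<and> (\<forall>l<n. c l = 0))"

lemma frame_spanI:
  "(\<And>t. u t = d * all_one v t + (\<Sum>l<n. c l * z l t)) \<Longrightarrow> u \<in> frame_span v z n"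
  unfolding frame_span_def by (auto intro!: exI[of _ d] exI[of _ c])

lemma frame_spanE:
  assumes "u \<in> frame_span v z n"
  obtains d c where "u = (\<lambda>t. d * all_one v t + (\<Sum>l<n. c l * z l t))"
  using assms unfolding frame_span_def by blast

lemma frame_span_0: "frame_span v z 0 = range (\<lambda>c0 t. c0 * all_one v t)"
  unfolding frame_span_def by auto

lemma frame_span_Suc:
  "frame_span v z (Suc n) = (\<lambda>(w, a) t. w t + a * z n t) ` (frame_span v z n \<times> UNIV)"
proof (intro equalityI subsetI)
  fix u assume "u \<in> frame_span v z (Suc n)"
  then obtain c0 c where u: "u = (\<lambda>t. c0 * all_one v t + (\<Sum>l<Suc n. c l * z l t))"
    by (rule frame_spanE)
  have "(\<lambda>t. c0 * all_one v t + (\<Sum>l<n. c l * z l t)) \<in> frame_span v z n"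
    by (rule frame_spanI[where d=c0 and c=c]) simp
  moreover have "u = (\<lambda>t. c0 * all_one v t + (\<Sum>l<n. c l * z l t) + c n * z n t)"
    unfolding u by (simp add: add.assoc)
  ultimately show "u \<in> (\<lambda>(w, a) t. w t + a * z n t) ` (frame_span v z n \<times> UNIV)"
    by force
next
  fix u assume "u \<in> (\<lambda>(w, a) t. w t + a * z n t) ` (frame_span v z n \<times> UNIV)"
  then obtain w a where u: "u = (\<lambda>t. w t + a * z n t)" and "w \<in> frame_span v z n"
    by auto
  then obtain c0 c where w: "w = (\<lambda>t. c0 * all_one v t + (\<Sum>l<n. c l * z l t))"
    using frame_spanE by blast
  have "(\<Sum>l<n. (c(n := a)) l * z l t) = (\<Sum>l<n. c l * z l t)" for t
    by (rule sum.cong) auto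
  then show "u \<in> frame_span v z (Suc n)"
    by (intro frame_spanI[where d=c0 and c="c(n := a)"]) (simp add: u w add.assoc)
qed

lemma finite_frame_span: "finite (frame_span v z n)"
  by (induction n) (auto simp: frame_span_0 frame_span_Suc)

lemma frame_span_mono: "m \<le> n \<Longrightarrow> frame_span v z m \<subseteq> frame_span v z n"
proof (induction n rule: dec_induct)
  case (step n)
  have "w \<in> frame_span v z (Suc n)" if "w \<in> frame_span v z n" for w
  proof -
    have "(\<lambda>(w, a) t. w t + a * z n t) (w, 0) \<in> frame_span v z (Suc n)"
      unfolding frame_span_Suc using that by blast
    then show ?thesis by simp
  qed
  with step show ?case by blast
qed simp

lemma frame_span_cong:
  assumes "\<And>l. l < n \<Longrightarrow> z l = z' l"
  shows "frame_span v z n = frame_span v z' n"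
proof -
  have "(\<Sum>l<n. c l * z l t) = (\<Sum>l<n. c l * z' l t)" for c and t :: nat
    using assms by (intro sum.cong) auto
  then show ?thesis unfolding frame_span_def by simp
qed

lemma frame_indep_cong:
  assumes "\<And>l. l < n \<Longrightarrow> z l = z' l"
  shows "frame_indep v z n = frame_indep v z' n"
proof -
  have "frame_span v z k = frame_span v z' k" if "k < n" for k
    using assms that by (intro frame_span_cong) auto
  then show ?thesis unfolding frame_indep_def using assms by auto
qed

lemma frame_indep_Suc: "frame_indep v z (Suc n) \<longleftrightarrow> frame_indep v z n \<and> z n \<notin> frame_span v z n"
  unfolding frame_indep_def using less_Suc_eq by auto

lemma all_one_in_frame_span: "all_one v \<in> frame_span v z n"
  by (rule frame_spanI[where d=1 and c="\<lambda>_. 0"]) simp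

lemma frame_in_frame_span:
  assumes "l < n"
  shows "z l \<in> frame_span v z n"
proof (rule frame_spanI[where d=0 and c="\<lambda>k. if k = l then 1 else 0"])
  fix t
  have "(\<Sum>k<n. (if k = l then 1 else 0) * z k t) = (\<Sum>k<n. if k = l then z k t else 0)"
    by (rule sum.cong) auto
  then show "z l t = 0 * all_one v t + (\<Sum>k<n. (if k = l then 1 else 0) * z k t)"
    using assms by simp
qed

lemma frame_span_add:
  assumes "x \<in> frame_span v z n" "y \<in> frame_span v z n"
  shows "(\<lambda>t. x t + y t) \<in> frame_span v z n"
proof -
  obtain c0 c where x: "x = (\<lambda>t. c0 * all_one v t + (\<Sum>l<n. c l * z l t))"
    using assms(1) by (rule frame_spanE)
  obtain d0 d where y: "y = (\<lambda>t. d0 * all_one v t + (\<Sum>l<n. d l * z l t))"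
    using assms(2) by (rule frame_spanE)
  show ?thesis
    by (rule frame_spanI[where d="c0 + d0" and c="\<lambda>l. c l + d l"])
      (simp add: x y algebra_simps sum.distrib)
qed

lemma frame_span_smult:
  assumes "x \<in> frame_span v z n"
  shows "(\<lambda>t. a * x t) \<in> frame_span v z n"
proof -
  obtain c0 c where x: "x = (\<lambda>t. c0 * all_one v t + (\<Sum>l<n. c l * z l t))"
    using assms by (rule frame_spanE)
  show ?thesis
    by (rule frame_spanI[where d="a * c0" and c="\<lambda>l. a * c l"])
      (simp add: x algebra_simps sum_distrib_left)
qed

lemma subspace3_frame_span:
  assumes "\<And>l. l < n \<Longrightarrow> z l \<in> vecs v"
  shows "subspace3 v (frame_span v z n)"
  unfolding subspace3_def
proof (intro conjI subsetI ballI allI)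
  fix u assume "u \<in> frame_span v z n"
  then obtain c0 c where u: "u = (\<lambda>t. c0 * all_one v t + (\<Sum>l<n. c l * z l t))"
    by (rule frame_spanE)
  have "z l t = 0" if "t \<notin> {1..v}" "l < n" for t l
    using assms that unfolding vecs_def by blast
  then show "u \<in> vecs v" unfolding u vecs_def all_one_def by simp
next
  show "(\<lambda>t. 0) \<in> frame_span v z n"
    using frame_span_smult[OF all_one_in_frame_span, of 0] by simp
qed (simp_all add: frame_span_add frame_span_smult)

lemma subspace3_add: "subspace3 v D \<Longrightarrow> x \<in> D \<Longrightarrow> y \<in> D \<Longrightarrow> (\<lambda>t. x t + y t) \<in> D"
  unfolding subspace3_def by blast

lemma subspace3_smult: "subspace3 v D \<Longrightarrow> x \<in> D \<Longrightarrow> (\<lambda>t. c * x t) \<in> D"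
  unfolding subspace3_def by blast

lemma frame_span_subset:
  assumes D: "subspace3 v D" "all_one v \<in> D" and z: "\<And>l. l < n \<Longrightarrow> z l \<in> D"
  shows "frame_span v z n \<subseteq> D"
  using z
proof (induction n)
  case 0
  then show ?case using D unfolding frame_span_0 subspace3_def by auto
next
  case (Suc n)
  have "(\<lambda>t. w t + a * z n t) \<in> D" if "w \<in> frame_span v z n" for w a
  proof (rule subspace3_add[OF D(1)])
    show "w \<in> D" using Suc that by auto
    show "(\<lambda>t. a * z n t) \<in> D" using Suc by (intro subspace3_smult[OF D(1)]) auto
  qed
  then show ?case unfolding frame_span_Suc by auto
qed
lemma card_frame_span:
  assumes v: "1 \<le> v" and indep: "frame_indep v z n"
  shows "card (frame_span v z n) = 3 ^ Suc n"
  using indep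
proof (induction n)
  case 0
  have "all_one v 1 = 1" using v by (simp add: all_one_def)
  then have "inj (\<lambda>c0 t. c0 * all_one v t)"
    by (intro injI) (metis mult.right_neutral)
  then show ?case unfolding frame_span_0 by (simp add: card_image)
next
  case (Suc n)
  have IH: "card (frame_span v z n) = 3 ^ Suc n" and zn: "z n \<notin> frame_span v z n"
    using Suc frame_indep_Suc by auto
  have "inj_on (\<lambda>(w, a) t. w t + a * z n t) (frame_span v z n \<times> UNIV)"
  proof (rule inj_onI, clarify)
    fix w a w' a'
    assume w: "w \<in> frame_span v z n" and w': "w' \<in> frame_span v z n"
      and eq: "(\<lambda>t. w t + a * z n t) = (\<lambda>t. w' t + a' * z n t)"
    show "w = w' \<and> a = a'"
    proof (cases "a = a'")
      case True
      then show ?thesis using eq by (auto simp: fun_eq_iff)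
    next
      case False
      have "z n t = (a - a') * (w' t + (-1) * w t)" for t
      proof -
        have "(a - a') * z n t = w' t - w t"
          using fun_cong[OF eq, of t] by (simp add: algebra_simps)
        then have "((a - a') * (a - a')) * z n t = (a - a') * (w' t - w t)"
          by (simp only: mult.assoc)
        then show ?thesis using False gf3_square_eq_1[of "a - a'"] by simp
      qed
      then have "z n = (\<lambda>t. (a - a') * (w' t + (-1) * w t))" by (rule ext)
      moreover have "(\<lambda>t. (a - a') * (w' t + (-1) * w t)) \<in> frame_span v z n"
        by (intro frame_span_smult frame_span_add w w')
      ultimately have "z n \<in> frame_span v z n" by simp
      then show ?thesis using zn by simp
    qed
  qed
  then have "card (frame_span v z (Suc n)) = card (frame_span v z n \<times> (UNIV :: 3 set))"
    unfolding frame_span_Suc by (rule card_image)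
  then show ?case using IH by (simp add: card_cartesian_product)
qed

lemma frame_lin_indepD:
  "frame_lin_indep v z n \<Longrightarrow> (\<And>t. t \<in> {1..v} \<Longrightarrow> c0 + (\<Sum>l<n. c l * z l t) = 0)
    \<Longrightarrow> c0 = 0 \<and> (\<forall>l<n. c l = 0)"
  unfolding frame_lin_indep_def by blast

lemma frame_lin_indep_mono:
  assumes indep: "frame_lin_indep v z n" and "m \<le> n"
  shows "frame_lin_indep v z m"
  unfolding frame_lin_indep_def
proof (intro allI impI)
  fix c0 c assume h: "\<forall>t\<in>{1..v}. c0 + (\<Sum>l<m. c l * z l t) = 0"
  define c' where "c' l = (if l < m then c l else 0)" for l
  have "(\<Sum>l<n. c' l * z l t) = (\<Sum>l<m. c l * z l t)" for t
  proof -
    have "(\<Sum>l<n. c' l * z l t) = (\<Sum>l\<in>{..<m}. c l * z l t)"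
      using \<open>m \<le> n\<close> by (intro sum.mono_neutral_cong_right) (auto simp: c'_def)
    then show ?thesis by simp
  qed
  then have "\<forall>t\<in>{1..v}. c0 + (\<Sum>l<n. c' l * z l t) = 0" using h by simp
  then have "c0 = 0 \<and> (\<forall>l<n. c' l = 0)"
    using indep unfolding frame_lin_indep_def by blast
  then show "c0 = 0 \<and> (\<forall>l<m. c l = 0)"
    using \<open>m \<le> n\<close> unfolding c'_def by (metis order_less_le_trans)
qed

lemma frame_indep_imp_lin_indep:
  assumes v: "1 \<le> v" and z: "\<And>l. l < n \<Longrightarrow> z l \<in> vecs v" and indep: "frame_indep v z n"
  shows "frame_lin_indep v z n"
  using z indep
proof (induction n)
  case 0
  then show ?case unfolding frame_lin_indep_def using v by auto
next
  case (Suc n)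
  have lin: "frame_lin_indep v z n" and zn: "z n \<notin> frame_span v z n"
    using Suc frame_indep_Suc by auto
  show ?case unfolding frame_lin_indep_def
  proof (intro allI impI)
    fix c0 c assume h: "\<forall>t\<in>{1..v}. c0 + (\<Sum>l<Suc n. c l * z l t) = 0"
    have cn: "c n = 0"
    proof (rule ccontr)
      assume "c n \<noteq> 0"
      then have sq: "c n * c n = 1" by (rule gf3_square_eq_1)
      have "z n t = (- c n * c0) * all_one v t + (\<Sum>l<n. (- c n * c l) * z l t)" for t
      proof (cases "t \<in> {1..v}")
        case True
        then have "c0 + (\<Sum>l<n. c l * z l t) + c n * z n t = 0"
          using h by (simp add: add.assoc)
        then have "c n * z n t = - (c0 + (\<Sum>l<n. c l * z l t))"
          by (metis add.commute eq_neg_iff_add_eq_0)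
        then have "(c n * c n) * z n t = - c n * (c0 + (\<Sum>l<n. c l * z l t))"
          by (simp only: mult.assoc) (simp add: algebra_simps)
        then show ?thesis using sq True
          by (simp add: all_one_def sum_distrib_left distrib_left mult.assoc)
      next
        case False
        then have "\<forall>l<Suc n. z l t = 0" using Suc.prems(1) unfolding vecs_def by blast
        moreover have "all_one v t = 0" using False by (simp add: all_one_def)
        ultimately show ?thesis by simp
      qed
      then have "z n \<in> frame_span v z n"
        by (rule frame_spanI[where d="- c n * c0" and c="\<lambda>l. - c n * c l"])
      then show False using zn by simp
    qed
    then have "\<forall>t\<in>{1..v}. c0 + (\<Sum>l<n. c l * z l t) = 0" using h by simp
    then have "c0 = 0 \<and> (\<forall>l<n. c l = 0)" using lin unfolding frame_lin_indep_def by blast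
    then show "c0 = 0 \<and> (\<forall>l<Suc n. c l = 0)" using cn less_Suc_eq by auto
  qed
qed

lemma frame_lin_indep_imp_indep:
  assumes lin: "frame_lin_indep v z n"
  shows "frame_indep v z n"
  unfolding frame_indep_def
proof (intro allI impI notI)
  fix k assume k: "k < n" and "z k \<in> frame_span v z k"
  then obtain c0 c where zk: "z k = (\<lambda>t. c0 * all_one v t + (\<Sum>l<k. c l * z l t))"
    by (blast elim: frame_spanE)
  define c' where "c' l = (if l < k then - c l else if l = k then 1 else 0)" for l
  have "- c0 + (\<Sum>l<n. c' l * z l t) = 0" if t: "t \<in> {1..v}" for t
  proof -
    have "(\<Sum>l<n. c' l * z l t) = (\<Sum>l<Suc k. c' l * z l t)"
      using k by (intro sum.mono_neutral_cong_right) (auto simp: c'_def)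
    also have "\<dots> = - (\<Sum>l<k. c l * z l t) + z k t"
      by (simp add: c'_def sum_negf)
    also have "\<dots> = c0" using fun_cong[OF zk, of t] t by (simp add: all_one_def)
    finally show ?thesis by simp
  qed
  then have "c' k = 0" using lin k unfolding frame_lin_indep_def by blast
  then show False by (simp add: c'_def)
qed

lemma lin_indep3D:
  "lin_indep3 B \<Longrightarrow> (\<lambda>t. \<Sum>b\<in>B. c b * b t) = (\<lambda>t. 0) \<Longrightarrow> \<forall>b\<in>B. c b = 0"
  unfolding lin_indep3_def by blast

lemma card_span3:
  assumes indep: "lin_indep3 B"
  shows "finite (span3 B)" "card (span3 B) = 3 ^ card B"
proof -
  have fin: "finite B" using indep unfolding lin_indep3_def by simp
  define F where "F c = (\<lambda>t. \<Sum>b\<in>B. c b * b t)" for c :: "gf3vec \<Rightarrow> 3"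
  have span: "span3 B = F ` (B \<rightarrow>\<^sub>E UNIV)"
  proof (intro equalityI subsetI)
    fix u assume "u \<in> span3 B"
    then obtain c where "u = F c" unfolding span3_def F_def by blast
    moreover have "F c = F (restrict c B)" unfolding F_def by (intro ext sum.cong) auto
    ultimately show "u \<in> F ` (B \<rightarrow>\<^sub>E UNIV)" by auto
  qed (auto simp: span3_def F_def)
  have "inj_on F (B \<rightarrow>\<^sub>E UNIV)"
  proof (rule inj_onI)
    fix c c' assume c: "c \<in> B \<rightarrow>\<^sub>E UNIV" and c': "c' \<in> B \<rightarrow>\<^sub>E UNIV" and eq: "F c = F c'"
    have "(\<lambda>t. \<Sum>b\<in>B. (c b - c' b) * b t) = (\<lambda>t. 0)"
    proof
      fix t
      have "(\<Sum>b\<in>B. (c b - c' b) * b t) = F c t - F c' t"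
        unfolding F_def by (simp add: algebra_simps sum_subtractf)
      then show "(\<Sum>b\<in>B. (c b - c' b) * b t) = 0" using eq by simp
    qed
    then have "\<forall>b\<in>B. c b - c' b = 0" by (rule lin_indep3D[OF indep])
    then show "c = c'" using c c' by (metis PiE_ext right_minus_eq)
  qed
  then have "card (span3 B) = card (B \<rightarrow>\<^sub>E (UNIV :: 3 set))" unfolding span by (rule card_image)
  then show "card (span3 B) = 3 ^ card B" using fin by (simp add: card_PiE)
  show "finite (span3 B)" unfolding span using fin by (simp add: finite_PiE)
qed

lemma subspace_dim_card:
  assumes "subspace_dim v D k"
  shows "finite D" "card D = 3 ^ k"
  using assms card_span3 unfolding subspace_dim_def by blast+

lemma lin_indep_family_inj_on:
  fixes f :: "'i \<Rightarrow> gf3vec"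
  assumes fin: "finite I"
    and indep: "\<And>c. (\<lambda>t. \<Sum>i\<in>I. c i * f i t) = (\<lambda>t. 0) \<Longrightarrow> \<forall>i\<in>I. c i = 0"
  shows "inj_on f I"
proof (rule inj_onI, rule ccontr)
  fix i j assume ij: "i \<in> I" "j \<in> I" "f i = f j" "i \<noteq> j"
  define c where "c k = (if k = i then 1 else if k = j then -1 else (0::3))" for k
  have "(\<Sum>k\<in>I. c k * f k t) = f i t - f j t" for t
  proof -
    have "(\<Sum>k\<in>I. c k * f k t)
        = (\<Sum>k\<in>I. (if k = i then f i t else 0) + (if k = j then - f j t else 0))"
      by (rule sum.cong) (auto simp: c_def ij(4))
    then show ?thesis using fin ij(1,2) by (simp add: sum.distrib)
  qed
  then have "\<forall>k\<in>I. c k = 0" using ij(3) by (intro indep) simp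
  then have "c i = 0" using ij(1) by blast
  then show False by (simp add: c_def)
qed

lemma lin_indep3_image:
  fixes f :: "'i \<Rightarrow> gf3vec"
  assumes fin: "finite I"
    and indep: "\<And>c. (\<lambda>t. \<Sum>i\<in>I. c i * f i t) = (\<lambda>t. 0) \<Longrightarrow> \<forall>i\<in>I. c i = 0"
  shows "lin_indep3 (f ` I)" "span3 (f ` I) = {(\<lambda>t. \<Sum>i\<in>I. c i * f i t) | c. True}"
proof -
  have inj: "inj_on f I" using fin indep by (rule lin_indep_family_inj_on)
  have sum_image: "(\<Sum>b\<in>f ` I. c b * b t) = (\<Sum>i\<in>I. c (f i) * f i t)" for c t
    using inj by (simp add: sum.reindex)
  show "lin_indep3 (f ` I)"
    unfolding lin_indep3_def
  proof (intro conjI allI impI)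
    fix c assume "(\<lambda>t. \<Sum>b\<in>f ` I. c b * b t) = (\<lambda>t. 0)"
    then have "(\<lambda>t. \<Sum>i\<in>I. c (f i) * f i t) = (\<lambda>t. 0)" by (simp only: sum_image)
    then have "\<forall>i\<in>I. c (f i) = 0" by (rule indep)
    then show "\<forall>b\<in>f ` I. c b = 0" by blast
  qed (use fin in simp)
  show "span3 (f ` I) = {(\<lambda>t. \<Sum>i\<in>I. c i * f i t) | c. True}"
  proof (intro equalityI subsetI)
    fix u assume "u \<in> span3 (f ` I)"
    then obtain c where "u = (\<lambda>t. \<Sum>b\<in>f ` I. c b * b t)" unfolding span3_def by blast
    then have "u = (\<lambda>t. \<Sum>i\<in>I. (c \<circ> f) i * f i t)" by (simp add: sum_image)
    then show "u \<in> {(\<lambda>t. \<Sum>i\<in>I. c i * f i t) | c. True}" by blast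
  next
    fix u assume "u \<in> {(\<lambda>t. \<Sum>i\<in>I. c i * f i t) | c. True}"
    then obtain c where u: "u = (\<lambda>t. \<Sum>i\<in>I. c i * f i t)" by blast
    have "(\<Sum>i\<in>I. c (inv_into I f (f i)) * f i t) = (\<Sum>i\<in>I. c i * f i t)" for t
      using inj by (intro sum.cong) auto
    then have "u = (\<lambda>t. \<Sum>b\<in>f ` I. (c \<circ> inv_into I f) b * b t)"
      unfolding u sum_image by simp
    then show "u \<in> span3 (f ` I)" unfolding span3_def by blast
  qed
qed

lemma subspace_dim_frame_span:
  assumes z: "\<And>l. l < n \<Longrightarrow> z l \<in> vecs v" and lin: "frame_lin_indep v z n"
  shows "subspace_dim v (frame_span v z n) (Suc n)"
proof -
  define f where "f = case_nat (all_one v) z"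
  have sum_f: "(\<Sum>i<Suc n. c i * f i t) = c 0 * all_one v t + (\<Sum>l<n. c (Suc l) * z l t)"
    for c t unfolding f_def by (subst sum.lessThan_Suc_shift) simp
  have "\<forall>i\<in>{..<Suc n}. c i = 0" if zero: "(\<lambda>t. \<Sum>i\<in>{..<Suc n}. c i * f i t) = (\<lambda>t. 0)" for c
  proof -
    have "c 0 + (\<Sum>l<n. c (Suc l) * z l t) = 0" if "t \<in> {1..v}" for t
      using fun_cong[OF zero, of t] that unfolding sum_f by (simp add: all_one_def)
    then have "c 0 = 0 \<and> (\<forall>l<n. c (Suc l) = 0)" by (rule frame_lin_indepD[OF lin])
    then show ?thesis by (auto simp: less_Suc_eq_0_disj)
  qed
  note inj = lin_indep_family_inj_on[OF finite_lessThan this]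
    and basis = lin_indep3_image[OF finite_lessThan this]
  have "{(\<lambda>t. \<Sum>i<Suc n. c i * f i t) | c. True} = frame_span v z n"
  proof (intro equalityI subsetI)
    fix u assume "u \<in> {(\<lambda>t. \<Sum>i<Suc n. c i * f i t) | c. True}"
    then obtain c where "u = (\<lambda>t. \<Sum>i<Suc n. c i * f i t)" by blast
    then have "u = (\<lambda>t. c 0 * all_one v t + (\<Sum>l<n. c (Suc l) * z l t))" by (simp only: sum_f)
    then show "u \<in> frame_span v z n" by (intro frame_spanI[where d="c 0" and c="c \<circ> Suc"]) simp
  next
    fix u assume "u \<in> frame_span v z n"
    then obtain c0 c where "u = (\<lambda>t. c0 * all_one v t + (\<Sum>l<n. c l * z l t))"
      by (rule frame_spanE)
    then have "u = (\<lambda>t. \<Sum>i<Suc n. case_nat c0 c i * f i t)" by (simp only: sum_f) simp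
    then show "u \<in> {(\<lambda>t. \<Sum>i<Suc n. c i * f i t) | c. True}" by blast
  qed
  then have "span3 (f ` {..<Suc n}) = frame_span v z n" using basis(2) by simp
  moreover have "card (f ` {..<Suc n}) = Suc n" using inj by (simp add: card_image)
  moreover have "f ` {..<Suc n} \<subseteq> frame_span v z n"
  proof (rule image_subsetI)
    fix i assume "i \<in> {..<Suc n}"
    then show "f i \<in> frame_span v z n"
      by (cases i) (simp_all add: f_def all_one_in_frame_span frame_in_frame_span)
  qed
  ultimately show ?thesis
    using basis(1) subspace3_frame_span[OF z] unfolding subspace_dim_def
    by (intro conjI exI[of _ "f ` {..<Suc n}"]) simp_all
qed

lemma frame_of_subspace:
  assumes v: "1 \<le> v" and D: "subspace3 v D" "all_one v \<in> D" "finite D" "card D = 3 ^ Suc k"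
  obtains x where "frame_indep v x k" "\<forall>l\<ge>k. x l = (\<lambda>_. 0)" "\<forall>l<k. x l \<in> D"
    "frame_span v x k = D"
proof -
  have "\<exists>x. frame_indep v x m \<and> (\<forall>l\<ge>m. x l = (\<lambda>_. 0)) \<and> (\<forall>l<m. x l \<in> D)" if "m \<le> k" for m
    using that
  proof (induction m)
    case 0
    show ?case by (intro exI[of _ "\<lambda>_ _. 0"]) (simp add: frame_indep_def)
  next
    case (Suc m)
    then obtain x where x: "frame_indep v x m" "\<forall>l\<ge>m. x l = (\<lambda>_. 0)" "\<forall>l<m. x l \<in> D"
      by auto
    have "card (frame_span v x m) < card D"
      using card_frame_span[OF v x(1)] D(4) Suc.prems by (simp add: power_strict_increasing)
    then have "\<not> D \<subseteq> frame_span v x m" by (metis card_mono finite_frame_span not_le)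
    then obtain y where y: "y \<in> D" "y \<notin> frame_span v x m" by blast
    have "frame_indep v (x(m := y)) m = frame_indep v x m" by (rule frame_indep_cong) simp
    moreover have "frame_span v (x(m := y)) m = frame_span v x m" by (rule frame_span_cong) simp
    ultimately have "frame_indep v (x(m := y)) (Suc m)"
      using x(1) y(2) by (simp add: frame_indep_Suc)
    moreover have "\<forall>l\<ge>Suc m. (x(m := y)) l = (\<lambda>_. 0)" using x(2) by simp
    moreover have "\<forall>l<Suc m. (x(m := y)) l \<in> D" using x(3) y(1) by (simp add: less_Suc_eq)
    ultimately show ?case by blast
  qed
  then obtain x where x: "frame_indep v x k" "\<forall>l\<ge>k. x l = (\<lambda>_. 0)" "\<forall>l<k. x l \<in> D"
    by blast
  have "frame_span v x k \<subseteq> D" using frame_span_subset[OF D(1,2)] x(3) by blast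
  moreover have "card (frame_span v x k) = card D" using card_frame_span[OF v x(1)] D(4) by simp
  ultimately have "frame_span v x k = D" using card_subset_eq[OF D(3)] by blast
  then show ?thesis using that x by blast
qed

definition fibre :: "nat \<Rightarrow> (nat \<Rightarrow> gf3vec) \<Rightarrow> nat \<Rightarrow> (nat \<Rightarrow> 3) \<Rightarrow> nat set" where
  "fibre v z n p = {t\<in>{1..v}. \<forall>l<n. z l t = p l}"

definition triple_closed :: "nat \<Rightarrow> (nat \<Rightarrow> gf3vec) \<Rightarrow> nat \<Rightarrow> bool" where
  "triple_closed v z n \<longleftrightarrow>
     (\<forall>a\<in>{1..v}. \<forall>b\<in>{1..v}. \<exists>c\<in>{1..v}. \<forall>l<n. z l a + z l b + z l c = 0)"

lemma finite_fibre: "finite (fibre v z n p)"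
  unfolding fibre_def by simp

lemma fibre_subset: "fibre v z n p \<subseteq> {1..v}"
  unfolding fibre_def by blast

lemma fibre_Suc: "fibre v z (Suc n) p = {t \<in> fibre v z n p. z n t = p n}"
  unfolding fibre_def using less_Suc_eq by auto

lemma fibre_cong: "(\<And>l. l < n \<Longrightarrow> p l = q l) \<Longrightarrow> fibre v z n p = fibre v z n q"
  unfolding fibre_def by auto

lemma fibre_frame_cong: "(\<And>l. l < n \<Longrightarrow> z l = z' l) \<Longrightarrow> fibre v z n p = fibre v z' n p"
  unfolding fibre_def by auto

lemma in_own_fibre: "t \<in> {1..v} \<Longrightarrow> t \<in> fibre v z n (\<lambda>l. z l t)"
  unfolding fibre_def by blast

lemma fibre_eq_own_fibre: "t \<in> fibre v z n p \<Longrightarrow> fibre v z n p = fibre v z n (\<lambda>l. z l t)"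
  unfolding fibre_def by auto

lemma card_fibre_split:
  "card (fibre v z n p) = (\<Sum>u\<in>UNIV. card (fibre v z (Suc n) (p(n := u))))"
proof -
  have fibre_u: "fibre v z (Suc n) (p(n := u)) = {t \<in> fibre v z n p. z n t = u}" for u
    unfolding fibre_Suc by (simp add: fibre_cong[of n "p(n := u)" p])
  have "fibre v z n p = (\<Union>u. {t \<in> fibre v z n p. z n t = u})" by blast
  then have "card (fibre v z n p) = card (\<Union>u. {t \<in> fibre v z n p. z n t = u})" by simp
  also have "\<dots> = (\<Sum>u\<in>UNIV. card {t \<in> fibre v z n p. z n t = u})"
    by (rule card_UN_disjoint) (auto simp: finite_fibre)
  finally show ?thesis unfolding fibre_u .
qed

lemma nonempty_fibres_imp_frame_lin_indep:
  assumes nonempty: "\<And>p. fibre v z n p \<noteq> {}"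
  shows "frame_lin_indep v z n"
  unfolding frame_lin_indep_def
proof (intro allI impI)
  fix c0 c assume h: "\<forall>t\<in>{1..v}. c0 + (\<Sum>l<n. c l * z l t) = 0"
  have at_p: "c0 + (\<Sum>l<n. c l * p l) = 0" for p
  proof -
    obtain t where t: "t \<in> fibre v z n p" using nonempty by blast
    then have "(\<Sum>l<n. c l * z l t) = (\<Sum>l<n. c l * p l)"
      unfolding fibre_def by (intro sum.cong) auto
    moreover have "c0 + (\<Sum>l<n. c l * z l t) = 0" using h t fibre_subset by blast
    ultimately show ?thesis by simp
  qed
  have c0: "c0 = 0" using at_p[of "\<lambda>_. 0"] by simp
  have "c k = 0" if "k < n" for k
  proof -
    have "(\<Sum>l<n. c l * (if l = k then 1 else 0)) = c k"
      using that by (simp add: if_distrib cong: if_cong)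
    then show ?thesis using at_p[of "\<lambda>l. if l = k then 1 else 0"] c0 by simp
  qed
  with c0 show "c0 = 0 \<and> (\<forall>l<n. c l = 0)" by blast
qed

lemma triple_closed_fibre_third:
  assumes closed: "triple_closed v z (Suc n)"
    and a: "a \<in> fibre v z n q" and b: "b \<in> fibre v z n r"
  shows "\<exists>c\<in>fibre v z n (\<lambda>l. - q l - r l). z n c = - z n a - z n b"
proof -
  have "a \<in> {1..v}" "b \<in> {1..v}" using a b fibre_subset by blast+
  then obtain c where c: "c \<in> {1..v}" "\<forall>l<Suc n. z l a + z l b + z l c = 0"
    using closed unfolding triple_closed_def by blast
  then have "z l c = - z l a - z l b" if "l < Suc n" for l
    using that add3_eq_0_iff by blast
  then show ?thesis using a b c(1) unfolding fibre_def by auto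
qed

lemma gf3_additive_local_linear:
  fixes h :: "(nat \<Rightarrow> 3) \<Rightarrow> 3"
  assumes add: "\<And>a b. h (\<lambda>l. a l + b l) = h a + h b"
    and local: "\<And>q r. (\<And>l. l < n \<Longrightarrow> q l = r l) \<Longrightarrow> h q = h r"
  shows "h q = (\<Sum>l<n. q l * h (\<lambda>k. if k = l then 1 else 0))"
proof -
  have h0: "h (\<lambda>_. 0) = 0" using add[of "\<lambda>_. 0" "\<lambda>_. 0"] by simp
  have smult: "h (\<lambda>l. s * a l) = s * h a" for s a
  proof -
    have "h (\<lambda>l. 2 * a l) = 2 * h a" by (simp only: add mult_2)
    then show ?thesis using gf3_cases[of s] h0 by auto
  qed
  have "h (\<lambda>l. if l < m then q l else 0) = (\<Sum>l<m. q l * h (\<lambda>k. if k = l then 1 else 0))" for m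
  proof (induction m)
    case 0
    then show ?case using h0 by simp
  next
    case (Suc m)
    have "(\<lambda>l. if l < Suc m then q l else 0)
        = (\<lambda>l. (if l < m then q l else 0) + q m * (if l = m then 1 else 0))"
      by (auto simp: fun_eq_iff less_Suc_eq)
    then have "h (\<lambda>l. if l < Suc m then q l else 0)
        = h (\<lambda>l. if l < m then q l else 0) + h (\<lambda>l. q m * (if l = m then 1 else 0))"
      by (simp only: add)
    also have "\<dots> = (\<Sum>l<Suc m. q l * h (\<lambda>k. if k = l then 1 else 0))"
      by (simp only: Suc.IH smult sum.lessThan_Suc)
    finally show ?case .
  qed
  moreover have "h q = h (\<lambda>l. if l < n then q l else 0)" by (rule local) simp
  ultimately show ?thesis by simp
qed

lemma gf3_triple_preserving_affine:
  fixes g :: "(nat \<Rightarrow> 3) \<Rightarrow> 3"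
  assumes triple: "\<And>q r. g (\<lambda>l. - q l - r l) = - g q - g r"
    and local: "\<And>q r. (\<And>l. l < n \<Longrightarrow> q l = r l) \<Longrightarrow> g q = g r"
  shows "\<exists>c. \<forall>q. g q = g (\<lambda>_. 0) + (\<Sum>l<n. q l * c l)"
proof -
  define h where "h q = g q - g (\<lambda>_. 0)" for q
  have h_triple: "h (\<lambda>l. - q l - r l) = - h q - h r" for q r
  proof -
    have "h (\<lambda>l. - q l - r l) = - h q - h r - 3 * g (\<lambda>_. 0)"
      unfolding h_def triple by (simp add: algebra_simps)
    moreover have "(3::3) = 0" by simp
    ultimately show ?thesis by simp
  qed
  have h_neg: "h (\<lambda>l. - q l) = - h q" for q
    using h_triple[of q "\<lambda>_. 0"] by (simp add: h_def)
  have "h (\<lambda>l. a l + b l) = h a + h b" for a b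
  proof -
    have "h (\<lambda>l. a l + b l) = - h (\<lambda>l. - a l) - h (\<lambda>l. - b l)"
      using h_triple[of "\<lambda>l. - a l" "\<lambda>l. - b l"] by simp
    then show ?thesis by (simp only: h_neg minus_minus diff_minus_eq_add)
  qed
  moreover have "h q = h r" if "\<And>l. l < n \<Longrightarrow> q l = r l" for q r
    using local[OF that] by (simp add: h_def)
  ultimately have h_linear: "h q = (\<Sum>l<n. q l * h (\<lambda>k. if k = l then 1 else 0))" for q
    by (rule gf3_additive_local_linear)
  have "g q = g (\<lambda>_. 0) + h q" for q by (simp add: h_def)
  then have g_affine: "g q = g (\<lambda>_. 0) + (\<Sum>l<n. q l * h (\<lambda>k. if k = l then 1 else 0))" for q
    by (subst (asm) h_linear)
  show ?thesis by (intro exI[of _ "\<lambda>l. h (\<lambda>k. if k = l then 1 else 0)"] allI g_affine)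
qed

lemma fibres_Suc_nonempty_if_nonconstant:
  assumes closed: "triple_closed v z (Suc n)" and nonempty: "\<And>p. fibre v z n p \<noteq> {}"
    and ab: "a \<in> fibre v z n q" "b \<in> fibre v z n q" "z n a \<noteq> z n b"
  shows "fibre v z (Suc n) p \<noteq> {}"
proof -
  (* V q is closed under (a, b) \<mapsto> - a - b, so it is all of GF(3) once it has two
     elements, and this property spreads from one fibre to all others. *)
  define V where "V q = z n ` fibre v z n q" for q
  have "fibre v z n (\<lambda>l. - q l - q l) = fibre v z n q" by (simp add: gf3_minus_self2)
  then obtain c where "c \<in> fibre v z n q" "z n c = - z n a - z n b"
    using triple_closed_fibre_third[OF closed ab(1,2)] by auto
  then have "- z n a - z n b \<in> V q" unfolding V_def by (metis image_eqI)
  then have "{z n a, z n b, - z n a - z n b} \<subseteq> V q"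
    using ab unfolding V_def by blast
  then have Vq: "V q = UNIV" using gf3_UNIV_third[OF ab(3)] by auto
  have spread: "V (\<lambda>l. - q' l - r l) = UNIV" if "V q' = UNIV" for q' r
  proof -
    obtain b' where b': "b' \<in> fibre v z n r" using nonempty by blast
    have "u \<in> V (\<lambda>l. - q' l - r l)" for u
    proof -
      have "- u - z n b' \<in> V q'" using that by auto
      then obtain a' where a': "a' \<in> fibre v z n q'" "z n a' = - u - z n b'"
        unfolding V_def by auto
      obtain c' where "c' \<in> fibre v z n (\<lambda>l. - q' l - r l)" "z n c' = - z n a' - z n b'"
        using triple_closed_fibre_third[OF closed a'(1) b'] by auto
      then show ?thesis unfolding V_def using a'(2) by (auto simp: algebra_simps)
    qed
    then show ?thesis by auto
  qed
  have "(\<lambda>l. - q l - (- q l - p l)) = p" by (simp add: fun_eq_iff)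
  then have "V p = UNIV" using spread[OF Vq, of "\<lambda>l. - q l - p l"] by simp
  then have "p n \<in> V p" by simp
  then show ?thesis unfolding V_def fibre_Suc by auto
qed

lemma not_frame_lin_indep_if_constant_on_fibres:
  assumes closed: "triple_closed v z (Suc n)" and nonempty: "\<And>p. fibre v z n p \<noteq> {}"
    and const: "\<And>q a b. a \<in> fibre v z n q \<Longrightarrow> b \<in> fibre v z n q \<Longrightarrow> z n a = z n b"
  shows "\<not> frame_lin_indep v z (Suc n)"
proof
  assume lin: "frame_lin_indep v z (Suc n)"
  (* g q is the value of z n on the fibre over q; it respects triples, hence is affine. *)
  define g where "g q = z n (SOME t. t \<in> fibre v z n q)" for q
  have g: "z n t = g q" if "t \<in> fibre v z n q" for t q
    using const[OF that someI[of "\<lambda>t. t \<in> fibre v z n q", OF that]] unfolding g_def .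
  have "g (\<lambda>l. - q l - r l) = - g q - g r" for q r
  proof -
    obtain a b where a: "a \<in> fibre v z n q" and b: "b \<in> fibre v z n r"
      using nonempty by (metis ex_in_conv)
    obtain c where "c \<in> fibre v z n (\<lambda>l. - q l - r l)" "z n c = - z n a - z n b"
      using triple_closed_fibre_third[OF closed a b] by auto
    then show ?thesis using g a b by metis
  qed
  moreover have "g q = g r" if "\<And>l. l < n \<Longrightarrow> q l = r l" for q r
    unfolding g_def using fibre_cong[of n q r, OF that] by simp
  ultimately have "\<exists>c. \<forall>q. g q = g (\<lambda>_. 0) + (\<Sum>l<n. q l * c l)"
    by (rule gf3_triple_preserving_affine)
  then obtain c where c: "\<And>q. g q = g (\<lambda>_. 0) + (\<Sum>l<n. q l * c l)" by blast
  have "- g (\<lambda>_. 0) + (\<Sum>l<Suc n. (if l < n then - c l else 1) * z l t) = 0" if t: "t \<in> {1..v}" for t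
  proof -
    have "z n t = g (\<lambda>_. 0) + (\<Sum>l<n. z l t * c l)"
      using g[OF in_own_fibre[OF t]] c[of "\<lambda>l. z l t"] by simp
    moreover have "(\<Sum>l<n. (if l < n then - c l else 1) * z l t) = - (\<Sum>l<n. z l t * c l)"
      by (simp add: sum_negf mult.commute)
    ultimately show ?thesis by simp
  qed
  then have "- g (\<lambda>_. 0) = 0 \<and> (\<forall>l<Suc n. (if l < n then - c l else 1) = (0::3))"
    by (rule frame_lin_indepD[OF lin])
  then have "(if n < n then - c n else 1) = (0::3)" by blast
  then show False by simp
qed

lemma fibres_nonempty:
  assumes v: "1 \<le> v" and lin: "frame_lin_indep v z n" and closed: "triple_closed v z n"
  shows "fibre v z n p \<noteq> {}"
  using lin closed
proof (induction n arbitrary: p)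
  case 0
  then show ?case using v unfolding fibre_def by auto
next
  case (Suc n)
  have "frame_lin_indep v z n" using Suc.prems(1) frame_lin_indep_mono le_SucI by blast
  moreover have "triple_closed v z n"
    using Suc.prems(2) unfolding triple_closed_def by (meson less_SucI)
  ultimately have nonempty: "\<And>p. fibre v z n p \<noteq> {}" using Suc.IH by blast
  show ?case
  proof (cases "\<exists>q a b. a \<in> fibre v z n q \<and> b \<in> fibre v z n q \<and> z n a \<noteq> z n b")
    case True
    then show ?thesis using fibres_Suc_nonempty_if_nonconstant[OF Suc.prems(2) nonempty] by blast
  next
    case False
    then show ?thesis
      using not_frame_lin_indep_if_constant_on_fibres[OF Suc.prems(2) nonempty] Suc.prems(1) by blast
  qed
qed

definition sts_third :: "nat set set \<Rightarrow> nat \<Rightarrow> nat \<Rightarrow> nat" where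
  "sts_third S a b = (THE c. c \<noteq> a \<and> c \<noteq> b \<and> {a, b, c} \<in> S)"

lemma is_STS_block:
  assumes "is_STS v S" "B \<in> S"
  shows "B \<subseteq> {1..v}" "card B = 3"
  using assms unfolding is_STS_def by simp_all

lemma is_STS_pair:
  "is_STS v S \<Longrightarrow> P \<subseteq> {1..v} \<Longrightarrow> card P = 2 \<Longrightarrow> \<exists>!B. B \<in> S \<and> P \<subseteq> B"
  unfolding is_STS_def by simp

lemma is_STS_block_unique:
  assumes S: "is_STS v S" and B: "B \<in> S" "B' \<in> S"
    and ac: "a \<in> B" "c \<in> B" "a \<in> B'" "c \<in> B'" "a \<noteq> c"
  shows "B = B'"
proof -
  have "{a, c} \<subseteq> {1..v}" "card {a, c} = 2"
    using is_STS_block(1)[OF S B(1)] ac by auto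
  then have "\<exists>!B. B \<in> S \<and> {a, c} \<subseteq> B" by (rule is_STS_pair[OF S])
  then show ?thesis using B ac by blast
qed

lemma is_STS_third_point:
  assumes S: "is_STS v S" and ab: "a \<in> {1..v}" "b \<in> {1..v}" "a \<noteq> b"
  shows "\<exists>c. c \<noteq> a \<and> c \<noteq> b \<and> {a, b, c} \<in> S"
proof -
  have "{a, b} \<subseteq> {1..v}" "card {a, b} = 2" using ab by auto
  then obtain B where B: "B \<in> S" "{a, b} \<subseteq> B" using is_STS_pair[OF S] by blast
  have "finite B" "card B = 3" using is_STS_block[OF S B(1)] finite_subset by auto
  then have "card (B - {a, b}) = 1" using B(2) ab(3) by (simp add: card_Diff_subset)
  then obtain c where c: "B - {a, b} = {c}" by (meson card_1_singletonE)
  then have "B = {a, b, c}" using B(2) by blast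
  then show ?thesis using B(1) c by blast
qed

lemma sts_third_eqI:
  assumes S: "is_STS v S" and "a \<noteq> b" "c \<noteq> a" "c \<noteq> b" "{a, b, c} \<in> S"
  shows "sts_third S a b = c"
  unfolding sts_third_def
proof (rule the_equality)
  fix c' assume c': "c' \<noteq> a \<and> c' \<noteq> b \<and> {a, b, c'} \<in> S"
  then have "{a, b, c'} = {a, b, c}"
    using is_STS_block_unique[OF S, of "{a, b, c'}" "{a, b, c}" a b] assms by auto
  then show "c' = c" using c' by blast
qed (use assms in blast)

lemma sts_third:
  assumes S: "is_STS v S" and ab: "a \<in> {1..v}" "b \<in> {1..v}" "a \<noteq> b"
  shows "sts_third S a b \<noteq> a" "sts_third S a b \<noteq> b" "{a, b, sts_third S a b} \<in> S"
    and "sts_third S a b \<in> {1..v}"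
proof -
  obtain c where c: "c \<noteq> a" "c \<noteq> b" "{a, b, c} \<in> S"
    using is_STS_third_point[OF S ab] by blast
  then have "sts_third S a b = c" using sts_third_eqI[OF S ab(3)] by blast
  then show "sts_third S a b \<noteq> a" "sts_third S a b \<noteq> b" "{a, b, sts_third S a b} \<in> S"
    using c by simp_all
  then show "sts_third S a b \<in> {1..v}" using is_STS_block(1)[OF S] by blast
qed

lemma sts_third_involution:
  assumes S: "is_STS v S" and ab: "a \<in> {1..v}" "b \<in> {1..v}" "a \<noteq> b"
  shows "sts_third S a (sts_third S a b) = b"
proof -
  let ?c = "sts_third S a b"
  have c: "?c \<noteq> a" "?c \<noteq> b" "{a, b, ?c} \<in> S" using sts_third[OF S ab] by auto
  moreover have "{a, ?c, b} = {a, b, ?c}" by blast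
  ultimately show ?thesis using ab(3) by (intro sts_third_eqI[OF S]) auto
qed

lemma orth_char_vec_iff_sum:
  assumes "B \<subseteq> {1..v}"
  shows "orth v x (char_vec B) \<longleftrightarrow> (\<Sum>t\<in>B. x t) = 0"
proof -
  have "(\<Sum>t\<in>{1..v}. x t * char_vec B t) = (\<Sum>t\<in>{1..v}. if t \<in> B then x t else 0)"
    by (rule sum.cong) (auto simp: char_vec_def)
  also have "\<dots> = (\<Sum>t\<in>{1..v} \<inter> B. x t)" by (simp add: sum.inter_restrict)
  also have "{1..v} \<inter> B = B" using assms by blast
  finally show ?thesis unfolding orth_def by simp
qed

lemma sts_orth_third_sum:
  assumes S: "is_STS v S" and orth: "\<forall>B\<in>S. orth v x (char_vec B)"
    and ab: "a \<in> {1..v}" "b \<in> {1..v}" "a \<noteq> b"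
  shows "x a + x b + x (sts_third S a b) = 0"
proof -
  let ?c = "sts_third S a b"
  have B: "{a, b, ?c} \<in> S" "?c \<noteq> a" "?c \<noteq> b" using sts_third[OF S ab] by auto
  have "(\<Sum>t\<in>{a, b, ?c}. x t) = 0"
    using orth[rule_format, OF B(1)] orth_char_vec_iff_sum[OF is_STS_block(1)[OF S B(1)]] by simp
  moreover have "a \<notin> {b, ?c}" "b \<notin> {?c}" using B(2,3) ab(3) by auto
  then have "(\<Sum>t\<in>{a, b, ?c}. x t) = x a + x b + x ?c"
    by (simp only: sum.insert finite.emptyI finite.insertI sum.empty add.assoc) simp
  ultimately show ?thesis by simp
qed

lemma sts_orth_triple_closed:
  assumes S: "is_STS v S" and orth: "\<forall>l<n. \<forall>B\<in>S. orth v (z l) (char_vec B)"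
  shows "triple_closed v z n"
  unfolding triple_closed_def
proof (intro ballI)
  fix a b assume a: "a \<in> {1..v}" and b: "b \<in> {1..v}"
  show "\<exists>c\<in>{1..v}. \<forall>l<n. z l a + z l b + z l c = 0"
  proof (cases "a = b")
    case True
    then have "\<forall>l<n. z l a + z l b + z l a = 0" by (metis gf3_add_self3)
    then show ?thesis using a by blast
  next
    case False
    have "z l a + z l b + z l (sts_third S a b) = 0" if "l < n" for l
      using orth that by (intro sts_orth_third_sum[OF S _ a b False]) blast
    then show ?thesis using sts_third(4)[OF S a b False] by blast
  qed
qed

lemma card_fibre_le:
  assumes S: "is_STS v S" and orth: "\<forall>l<n. \<forall>B\<in>S. orth v (z l) (char_vec B)"
    and nonempty: "\<And>p. fibre v z n p \<noteq> {}"
  shows "card (fibre v z n q) \<le> card (fibre v z n p)"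
proof (cases "\<forall>l<n. p l = q l")
  case True
  then show ?thesis using fibre_cong[of n q p] by simp
next
  case False
  then obtain l0 where l0: "l0 < n" "p l0 \<noteq> q l0" by blast
  (* b \<mapsto> sts_third S a b maps the fibre over q injectively into the fibre over p. *)
  obtain a where a: "a \<in> fibre v z n (\<lambda>l. - p l - q l)"
    using nonempty[of "\<lambda>l. - p l - q l"] by blast
  have a_ne: "a \<noteq> b" if b: "b \<in> fibre v z n q" for b
  proof
    assume "a = b"
    then have "- p l0 - q l0 = q l0" using a b l0(1) unfolding fibre_def by auto
    then show False using l0(2) gf3_third_eq_imp_eq by blast
  qed
  have "sts_third S a b \<in> fibre v z n p" if b: "b \<in> fibre v z n q" for b
  proof -
    have ab: "a \<in> {1..v}" "b \<in> {1..v}" "a \<noteq> b" using a b a_ne fibre_subset by blast+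
    have "z l (sts_third S a b) = p l" if "l < n" for l
    proof -
      have "z l a + z l b + z l (sts_third S a b) = 0"
        using orth that by (intro sts_orth_third_sum[OF S _ ab]) blast
      then have "z l (sts_third S a b) = - z l a - z l b" by (simp add: add3_eq_0_iff)
      then show ?thesis using a b that unfolding fibre_def by simp
    qed
    then show ?thesis using sts_third(4)[OF S ab] unfolding fibre_def by blast
  qed
  moreover have "inj_on (sts_third S a) (fibre v z n q)"
  proof (rule inj_onI)
    fix b b' assume b: "b \<in> fibre v z n q" and b': "b' \<in> fibre v z n q"
      and eq: "sts_third S a b = sts_third S a b'"
    have av: "a \<in> {1..v}" and bv: "b \<in> {1..v}" "b' \<in> {1..v}"
      using a b b' fibre_subset by blast+
    have "b = sts_third S a (sts_third S a b)"
      using sts_third_involution[OF S av bv(1) a_ne[OF b]] by simp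
    also have "\<dots> = b'"
      unfolding eq using sts_third_involution[OF S av bv(2) a_ne[OF b']] .
    finally show "b = b'" .
  qed
  ultimately show ?thesis by (intro card_inj_on_le[OF _ _ finite_fibre]) auto
qed

lemma card_fibre_sts:
  assumes v: "1 \<le> v" and S: "is_STS v S" and orth: "\<forall>l<n. \<forall>B\<in>S. orth v (z l) (char_vec B)"
    and lin: "frame_lin_indep v z n" and "k \<le> n"
  shows "card (fibre v z k p) * 3 ^ k = v"
  using \<open>k \<le> n\<close>
proof (induction k arbitrary: p)
  case 0
  have "fibre v z 0 p = {1..v}" unfolding fibre_def by auto
  then show ?case by simp
next
  case (Suc k)
  have orth_k: "\<forall>l<Suc k. \<forall>B\<in>S. orth v (z l) (char_vec B)" using orth Suc.prems by auto
  have "fibre v z (Suc k) q \<noteq> {}" for q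
    using fibres_nonempty[OF v frame_lin_indep_mono[OF lin Suc.prems]
        sts_orth_triple_closed[OF S orth_k]] .
  then have eq: "card (fibre v z (Suc k) q) = card (fibre v z (Suc k) p)" for q
    using card_fibre_le[OF S orth_k] by (meson le_antisym)
  have "card (fibre v z k p) = (\<Sum>u\<in>(UNIV :: 3 set). card (fibre v z (Suc k) p))"
    unfolding card_fibre_split[of v z k p] using eq by (rule sum.cong[OF refl])
  then have "card (fibre v z k p) = 3 * card (fibre v z (Suc k) p)" by simp
  then show ?case using Suc.IH[of p] Suc.prems by simp
qed

lemma fibre_matching_perm:
  assumes cards: "\<And>p. card (fibre v z0 n p) = card (fibre v z n p)"
  obtains \<rho> where "bij_betw \<rho> {1..v} {1..v}" "\<And>s l. s \<in> {1..v} \<Longrightarrow> l < n \<Longrightarrow> z l (\<rho> s) = z0 l s"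
proof -
  have "\<forall>p. \<exists>f. bij_betw f (fibre v z0 n p) (fibre v z n p)"
    using cards by (intro allI finite_same_card_bij finite_fibre)
  then obtain f where f: "\<And>p. bij_betw (f p) (fibre v z0 n p) (fibre v z n p)"
    by metis
  define pt where "pt s = (\<lambda>l. if l < n then z0 l s else 0)" for s
  define \<rho> where "\<rho> s = f (pt s) s" for s
  have own: "s \<in> fibre v z0 n (pt s)" if "s \<in> {1..v}" for s
    using that unfolding fibre_def pt_def by simp
  have \<rho>: "\<rho> s \<in> fibre v z n (pt s)" if "s \<in> {1..v}" for s
    unfolding \<rho>_def using bij_betwE[OF f] own[OF that] by blast
  then have \<rho>_z: "z l (\<rho> s) = z0 l s" if "s \<in> {1..v}" "l < n" for s l
    using that unfolding fibre_def pt_def by simp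
  have "inj_on \<rho> {1..v}"
  proof (rule inj_onI)
    fix s s' assume s: "s \<in> {1..v}" and s': "s' \<in> {1..v}" and eq: "\<rho> s = \<rho> s'"
    have "pt s = pt s'" unfolding pt_def using \<rho>_z[OF s] \<rho>_z[OF s'] eq by auto
    then have "f (pt s) s = f (pt s) s'" "s' \<in> fibre v z0 n (pt s)"
      using eq own[OF s'] unfolding \<rho>_def by simp_all
    then show "s = s'" using f own[OF s] unfolding bij_betw_def inj_on_def by blast
  qed
  moreover have "\<rho> ` {1..v} \<subseteq> {1..v}" using \<rho> fibre_subset by blast
  ultimately have "bij_betw \<rho> {1..v} {1..v}"
    by (simp add: bij_betw_def card_image card_subset_eq)
  then show ?thesis using that \<rho>_z by blast
qed

lemma is_STS_image_perm:
  assumes S0: "is_STS v S0" and \<rho>: "bij_betw \<rho> {1..v} {1..v}"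
  shows "is_STS v ((`) \<rho> ` S0)"
  unfolding is_STS_def
proof (intro conjI ballI allI impI)
  fix B assume "B \<in> (`) \<rho> ` S0"
  then obtain B0 where B0: "B0 \<in> S0" "B = \<rho> ` B0" by blast
  have "B0 \<subseteq> {1..v}" "card B0 = 3" using is_STS_block[OF S0 B0(1)] by auto
  moreover have "inj_on \<rho> B0" using \<rho> \<open>B0 \<subseteq> {1..v}\<close> by (meson bij_betw_def inj_on_subset)
  ultimately show "B \<subseteq> {1..v}" "card B = 3"
    using \<rho> B0(2) bij_betw_imp_surj_on[OF \<rho>] by (auto simp: card_image)
next
  fix P assume P: "P \<subseteq> {1..v} \<and> card P = 2"
  define \<tau> where "\<tau> = inv_into {1..v} \<rho>"
  have \<tau>: "bij_betw \<tau> {1..v} {1..v}" unfolding \<tau>_def by (rule bij_betw_inv_into[OF \<rho>])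
  have \<rho>\<tau>: "\<rho> (\<tau> t) = t" if "t \<in> {1..v}" for t
    unfolding \<tau>_def using that \<rho> by (simp add: bij_betw_inv_into_right)
  have \<tau>\<rho>: "\<tau> (\<rho> s) = s" if "s \<in> {1..v}" for s
    unfolding \<tau>_def using that \<rho> by (simp add: bij_betw_inv_into_left)
  have "\<tau> ` P \<subseteq> {1..v}" "card (\<tau> ` P) = 2"
    using P bij_betw_imp_surj_on[OF \<tau>] inj_on_subset[OF bij_betw_imp_inj_on[OF \<tau>]]
    by (auto simp: card_image)
  then obtain B0 where B0: "B0 \<in> S0" "\<tau> ` P \<subseteq> B0"
    and B0_unique: "\<And>B1. B1 \<in> S0 \<Longrightarrow> \<tau> ` P \<subseteq> B1 \<Longrightarrow> B1 = B0"
    using is_STS_pair[OF S0] by metis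
  have B0v: "B0 \<subseteq> {1..v}" using is_STS_block(1)[OF S0 B0(1)] .
  show "\<exists>!B. B \<in> (`) \<rho> ` S0 \<and> P \<subseteq> B"
  proof (rule ex1I[of _ "\<rho> ` B0"])
    have "P \<subseteq> \<rho> ` \<tau> ` P" using P \<rho>\<tau> by force
    then show "\<rho> ` B0 \<in> (`) \<rho> ` S0 \<and> P \<subseteq> \<rho> ` B0" using B0 by blast
  next
    fix B assume "B \<in> (`) \<rho> ` S0 \<and> P \<subseteq> B"
    then obtain B1 where B1: "B1 \<in> S0" "B = \<rho> ` B1" "P \<subseteq> \<rho> ` B1" by blast
    have "B1 \<subseteq> {1..v}" using is_STS_block(1)[OF S0 B1(1)] .
    then have "\<tau> ` P \<subseteq> B1" using B1(3) \<tau>\<rho> by force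
    then show "B = \<rho> ` B0" using B0_unique[OF B1(1)] B1(2) by simp
  qed
qed

lemma sts_orth_transport:
  assumes S0: "is_STS v S0" and orth0: "\<forall>w\<in>frame_span v z0 n. \<forall>B\<in>S0. orth v w (char_vec B)"
    and cards: "\<And>p. card (fibre v z0 n p) = card (fibre v z n p)"
  obtains S where "is_STS v S" "\<forall>w\<in>frame_span v z n. \<forall>B\<in>S. orth v w (char_vec B)"
proof -
  obtain \<rho> where \<rho>: "bij_betw \<rho> {1..v} {1..v}"
    and \<rho>_z: "\<And>s l. s \<in> {1..v} \<Longrightarrow> l < n \<Longrightarrow> z l (\<rho> s) = z0 l s"
    using fibre_matching_perm[OF cards] by blast
  have "orth v w (char_vec B)" if w: "w \<in> frame_span v z n" and B: "B \<in> (`) \<rho> ` S0" for w B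
  proof -
    obtain B0 where B0: "B0 \<in> S0" "B = \<rho> ` B0" using B by blast
    have B0v: "B0 \<subseteq> {1..v}" using is_STS_block(1)[OF S0 B0(1)] .
    obtain c0 c where w_def: "w = (\<lambda>t. c0 * all_one v t + (\<Sum>l<n. c l * z l t))"
      using w by (rule frame_spanE)
    define w0 where "w0 = (\<lambda>s. c0 * all_one v s + (\<Sum>l<n. c l * z0 l s))"
    have w0: "w0 \<in> frame_span v z0 n"
      unfolding w0_def by (rule frame_spanI[where d=c0 and c=c]) simp
    have w_w0: "w (\<rho> s) = w0 s" if s: "s \<in> {1..v}" for s
    proof -
      have "\<rho> s \<in> {1..v}" using \<rho> s bij_betwE by blast
      moreover have "(\<Sum>l<n. c l * z l (\<rho> s)) = (\<Sum>l<n. c l * z0 l s)"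
        using \<rho>_z[OF s] by (intro sum.cong) auto
      ultimately show ?thesis unfolding w_def w0_def using s by (simp add: all_one_def)
    qed
    have "(\<Sum>t\<in>B. w t) = (\<Sum>s\<in>B0. w (\<rho> s))"
      unfolding B0(2) using inj_on_subset[OF bij_betw_imp_inj_on[OF \<rho>] B0v]
      by (simp add: sum.reindex)
    also have "\<dots> = (\<Sum>s\<in>B0. w0 s)" using w_w0 B0v by (intro sum.cong) auto
    also have "\<dots> = 0"
    proof -
      have "orth v w0 (char_vec B0)" using orth0 w0 B0(1) by blast
      then show ?thesis unfolding orth_char_vec_iff_sum[OF B0v] .
    qed
    finally have "(\<Sum>t\<in>B. w t) = 0" .
    moreover have "B \<subseteq> {1..v}" using B0(2) B0v bij_betw_imp_surj_on[OF \<rho>] by blast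
    ultimately show ?thesis by (simp add: orth_char_vec_iff_sum)
  qed
  then show ?thesis by (intro that[OF is_STS_image_perm[OF S0 \<rho>]] ballI)
qed

lemma card_fun_upd_extensions:
  assumes fin: "finite A" and fixed: "\<And>z. z \<in> A \<Longrightarrow> z n = d"
    and fin_F: "\<And>z. z \<in> A \<Longrightarrow> finite (F z)" and card_F: "\<And>z. z \<in> A \<Longrightarrow> card (F z) = N"
  shows "finite {z(n := y) | z y. z \<in> A \<and> y \<in> F z}"
    and "card {z(n := y) | z y. z \<in> A \<and> y \<in> F z} = card A * N"
proof -
  have eq: "{z(n := y) | z y. z \<in> A \<and> y \<in> F z} = (\<lambda>(z, y). z(n := y)) ` Sigma A F" by auto
  have "inj_on (\<lambda>(z, y). z(n := y)) (Sigma A F)"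
  proof (rule inj_onI, clarify)
    fix z y z' y' assume z: "z \<in> A" "z' \<in> A" and e: "z(n := y) = z'(n := y')"
    then have "y = y'" by (metis fun_upd_same)
    moreover have "z = z'"
      using fun_cong[OF e] fixed[OF z(1)] fixed[OF z(2)] by (metis fun_upd_apply ext)
    ultimately show "z = z' \<and> y = y'" by simp
  qed
  then have "card {z(n := y) | z y. z \<in> A \<and> y \<in> F z} = card (Sigma A F)"
    unfolding eq by (rule card_image)
  also have "\<dots> = card A * N" using fin fin_F card_F by simp
  finally show "card {z(n := y) | z y. z \<in> A \<and> y \<in> F z} = card A * N" .
  show "finite {z(n := y) | z y. z \<in> A \<and> y \<in> F z}" unfolding eq using fin fin_F by auto
qed

lemma balanced_gf3_map:
  assumes fin: "finite F" and card_F: "card F = 3 * m"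
    and A: "A0 \<subseteq> F" "card A0 = m" "A1 \<subseteq> F - A0" "card A1 = m"
  defines "g \<equiv> \<lambda>t\<in>F. if t \<in> A0 then 0 else if t \<in> A1 then 1 else (2::3)"
  shows "g \<in> F \<rightarrow>\<^sub>E UNIV" "\<forall>u. card {t\<in>F. g t = u} = m"
    "{t\<in>F. g t = 0} = A0" "{t\<in>F. g t = 1} = A1"
proof -
  show "g \<in> F \<rightarrow>\<^sub>E UNIV" unfolding g_def by simp
  show A0_eq: "{t\<in>F. g t = 0} = A0" and A1_eq: "{t\<in>F. g t = 1} = A1"
    using A unfolding g_def by auto
  have "{t\<in>F. g t = 2} = F - A0 - A1" using A unfolding g_def by auto
  moreover have "card (F - A0 - A1) = m"
    using A fin card_F by (simp add: card_Diff_subset finite_subset Diff_subset_conv)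
  ultimately have A2: "card {t\<in>F. g t = 2} = m" by simp
  show "\<forall>u. card {t\<in>F. g t = u} = m"
  proof
    fix u :: 3
    show "card {t\<in>F. g t = u} = m"
      using gf3_cases[of u] A2 A0_eq A1_eq A(2,4) by (elim disjE) simp_all
  qed
qed

lemma card_disjoint_subset_pairs:
  assumes fin: "finite F" and card_F: "card F = 3 * m"
  shows "card (Sigma {A0. A0 \<subseteq> F \<and> card A0 = m} (\<lambda>A0. {A1. A1 \<subseteq> F - A0 \<and> card A1 = m}))
    = ((3 * m) choose m) * ((2 * m) choose m)"
proof -
  have "card (Sigma {A0. A0 \<subseteq> F \<and> card A0 = m} (\<lambda>A0. {A1. A1 \<subseteq> F - A0 \<and> card A1 = m}))
      = (\<Sum>A0\<in>{A0. A0 \<subseteq> F \<and> card A0 = m}. card {A1. A1 \<subseteq> F - A0 \<and> card A1 = m})"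
    using fin by (intro card_SigmaI) auto
  also have "\<dots> = (\<Sum>A0\<in>{A0. A0 \<subseteq> F \<and> card A0 = m}. (2 * m) choose m)"
  proof (rule sum.cong[OF refl])
    fix A0 assume "A0 \<in> {A0. A0 \<subseteq> F \<and> card A0 = m}"
    then have "card (F - A0) = 2 * m"
      using card_F fin card_Diff_subset[of A0 F] finite_subset[of A0 F] by simp
    then show "card {A1. A1 \<subseteq> F - A0 \<and> card A1 = m} = (2 * m) choose m"
      using n_subsets[of "F - A0" m] fin by simp
  qed
  also have "\<dots> = ((3 * m) choose m) * ((2 * m) choose m)" using n_subsets[OF fin, of m] card_F by simp
  finally show ?thesis .
qed

lemma card_balanced_gf3_maps:
  assumes fin: "finite F" and card_F: "card F = 3 * m"
  shows "card {g \<in> F \<rightarrow>\<^sub>E (UNIV :: 3 set). \<forall>u. card {t\<in>F. g t = u} = m}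
    = ((3 * m) choose m) * ((2 * m) choose m)"
proof -
  define H where "H = {g \<in> F \<rightarrow>\<^sub>E (UNIV :: 3 set). \<forall>u. card {t\<in>F. g t = u} = m}"
  define P where "P = Sigma {A0. A0 \<subseteq> F \<and> card A0 = m} (\<lambda>A0. {A1. A1 \<subseteq> F - A0 \<and> card A1 = m})"
  define \<Phi> where "\<Phi> g = ({t\<in>F. g t = 0}, {t\<in>F. g t = (1::3)})" for g
  have "inj_on \<Phi> H"
  proof (rule inj_onI)
    fix g g' assume g: "g \<in> H" and g': "g' \<in> H" and e: "\<Phi> g = \<Phi> g'"
    have "g t = g' t" if "t \<in> F" for t
    proof -
      have "g t = 0 \<longleftrightarrow> g' t = 0" "g t = 1 \<longleftrightarrow> g' t = 1"
        using e that unfolding \<Phi>_def by (simp_all add: set_eq_iff) blast+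
      then show ?thesis using gf3_cases[of "g t"] gf3_cases[of "g' t"] by auto
    qed
    then show "g = g'" using g g' unfolding H_def by (metis (mono_tags, lifting) PiE_ext mem_Collect_eq)
  qed
  moreover have "\<Phi> ` H = P"
  proof (intro equalityI subsetI)
    fix x assume "x \<in> \<Phi> ` H"
    then obtain g where "g \<in> H" "x = \<Phi> g" by blast
    then show "x \<in> P" unfolding P_def H_def \<Phi>_def by auto
  next
    fix x assume "x \<in> P"
    then obtain A0 A1 where x: "x = (A0, A1)" and A: "A0 \<subseteq> F" "card A0 = m" "A1 \<subseteq> F - A0" "card A1 = m"
      unfolding P_def by blast
    note g = balanced_gf3_map[OF fin card_F A]
    then have "(\<lambda>t\<in>F. if t \<in> A0 then 0 else if t \<in> A1 then 1 else (2::3)) \<in> H"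
      unfolding H_def by blast
    moreover have "\<Phi> (\<lambda>t\<in>F. if t \<in> A0 then 0 else if t \<in> A1 then 1 else (2::3)) = x"
      unfolding \<Phi>_def x using g(3,4) by simp
    ultimately show "x \<in> \<Phi> ` H" by blast
  qed
  ultimately have "card H = card P" using card_image by fastforce
  then show ?thesis unfolding H_def P_def using card_disjoint_subset_pairs[OF fin card_F] by simp
qed

lemma real_choose_mult_choose:
  "real (((3 * m) choose m) * ((2 * m) choose m)) = fact (3 * m) / fact m ^ 3"
proof -
  have a: "real ((3 * m) choose m) = fact (3 * m) / (fact m * fact (2 * m))"
    using binomial_fact[of m "3 * m"] by simp
  have b: "real ((2 * m) choose m) = fact (2 * m) / (fact m * fact m)"
    using binomial_fact[of m "2 * m"] by simp
  show ?thesis unfolding of_nat_mult a b by (simp add: power3_eq_cube field_simps)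
qed

lemma vecs_glue:
  assumes cover: "\<Union>FF = {1..v}"
    and disj: "pairwise disjnt FF"
    and \<phi>: "\<And>F. F \<in> FF \<Longrightarrow> \<phi> F \<in> F \<rightarrow>\<^sub>E UNIV"
  obtains y where "y \<in> vecs v" "\<And>F. F \<in> FF \<Longrightarrow> restrict y F = \<phi> F"
proof -
  define block where "block t = (THE F. F \<in> FF \<and> t \<in> F)" for t
  have block: "block t = F" if "F \<in> FF" "t \<in> F" for F t
    unfolding block_def using that disj by (intro the_equality) (auto simp: pairwise_def disjnt_def)
  define y where "y t = (if t \<in> {1..v} then \<phi> (block t) t else 0)" for t
  have "restrict y F = \<phi> F" if F: "F \<in> FF" for F
  proof
    fix t
    show "restrict y F t = \<phi> F t"
    proof (cases "t \<in> F")
      case True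
      then have "t \<in> {1..v}" using F cover by blast
      then show ?thesis using True block[OF F True] by (simp add: y_def)
    next
      case False
      then have "\<phi> F t = undefined" using \<phi>[OF F] by (rule PiE_arb[rotated])
      then show ?thesis using False by simp
    qed
  qed
  moreover have "y \<in> vecs v" unfolding vecs_def y_def by simp
  ultimately show ?thesis using that by blast
qed

lemma card_vecs_blockwise:
  assumes fin: "finite FF" and cover: "\<Union>FF = {1..v}"
    and disj: "pairwise disjnt FF"
  shows "card {y \<in> vecs v. \<forall>F\<in>FF. P F (restrict y F)}
    = (\<Prod>F\<in>FF. card {g \<in> F \<rightarrow>\<^sub>E UNIV. P F g})"
proof -
  define G where "G = {y \<in> vecs v. \<forall>F\<in>FF. P F (restrict y F)}"
  define H where "H F = {g \<in> F \<rightarrow>\<^sub>E UNIV. P F g}" for F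
  define \<Phi> where "\<Phi> y = (\<lambda>F\<in>FF. restrict y F)" for y :: gf3vec
  have "inj_on \<Phi> G"
  proof (rule inj_onI, rule ext)
    fix y y' t assume y: "y \<in> G" "y' \<in> G" and e: "\<Phi> y = \<Phi> y'"
    show "y t = y' t"
    proof (cases "t \<in> {1..v}")
      case True
      then obtain F where "F \<in> FF" "t \<in> F" using cover by blast
      then show ?thesis using fun_cong[OF fun_cong[OF e, of F], of t] unfolding \<Phi>_def by simp
    next
      case False
      then show ?thesis using y unfolding G_def vecs_def by simp
    qed
  qed
  moreover have "\<Phi> ` G = PiE FF H"
  proof (intro equalityI subsetI)
    fix x assume "x \<in> \<Phi> ` G"
    then show "x \<in> PiE FF H" unfolding G_def H_def \<Phi>_def by auto
  next
    fix \<phi> assume \<phi>: "\<phi> \<in> PiE FF H"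
    have \<phi>_F: "\<phi> F \<in> F \<rightarrow>\<^sub>E UNIV" if "F \<in> FF" for F
      using PiE_mem[OF \<phi> that] unfolding H_def by simp
    obtain y where y: "y \<in> vecs v" "\<And>F. F \<in> FF \<Longrightarrow> restrict y F = \<phi> F"
      using vecs_glue[OF cover disj \<phi>_F] by blast
    have "\<Phi> y F = \<phi> F" for F
      using y(2) PiE_arb[OF \<phi>, of F] unfolding \<Phi>_def by (cases "F \<in> FF") simp_all
    moreover have "y \<in> G" using y PiE_mem[OF \<phi>] unfolding G_def H_def by auto
    ultimately show "\<phi> \<in> \<Phi> ` G" by (metis ext image_eqI)
  qed
  ultimately have "card G = card (PiE FF H)" by (metis card_image)
  then show ?thesis using fin unfolding G_def H_def by (simp add: card_PiE)
qed

lemma fibres_partition: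
  shows "finite (range (fibre v z k))" "\<Union>(range (fibre v z k)) = {1..v}"
    and "pairwise disjnt (range (fibre v z k))"
proof -
  have "range (fibre v z k) \<subseteq> Pow {1..v}" using fibre_subset by blast
  then show "finite (range (fibre v z k))" using finite_subset by blast
  show "\<Union>(range (fibre v z k)) = {1..v}" using in_own_fibre fibre_subset by blast
  show "pairwise disjnt (range (fibre v z k))"
    unfolding pairwise_def disjnt_def using fibre_eq_own_fibre by blast
qed

lemma card_range_fibre:
  assumes "\<And>p. card (fibre v z k p) = s"
  shows "card (range (fibre v z k)) * s = v"
proof -
  have "v = card (\<Union>(range (fibre v z k)))" using fibres_partition(2) by simp
  also have "\<dots> = (\<Sum>F\<in>range (fibre v z k). card F)"
    using fibres_partition(3) by (rule card_Union_disjoint) (auto simp: finite_fibre)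
  also have "\<dots> = (\<Sum>F\<in>range (fibre v z k). s)" using assms by (intro sum.cong) auto
  also have "\<dots> = card (range (fibre v z k)) * s" by simp
  finally show ?thesis by simp
qed

lemma fibre_upd_Suc: "fibre v (z(k := y)) (Suc k) p = {t \<in> fibre v z k p. y t = p k}"
  unfolding fibre_Suc by (simp add: fibre_frame_cong[of k "z(k := y)" z])

lemma card_even_refinements:
  assumes fib: "\<And>p. card (fibre v z k p) = 3 * m"
  shows "card {y \<in> vecs v. \<forall>p. card (fibre v (z(k := y)) (Suc k) p) = m}
    = (((3 * m) choose m) * ((2 * m) choose m)) ^ card (range (fibre v z k))"
proof -
  define FF where "FF = range (fibre v z k)"
  define P where "P F g \<longleftrightarrow> (\<forall>u. card {t\<in>F. g t = u} = m)" for F and g :: "nat \<Rightarrow> 3"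
  have P_restrict: "P F (restrict y F) \<longleftrightarrow> (\<forall>u. card {t\<in>F. y t = u} = m)" for F y
    unfolding P_def by (simp cong: conj_cong)
  have "(\<forall>p. card (fibre v (z(k := y)) (Suc k) p) = m) \<longleftrightarrow> (\<forall>F\<in>FF. P F (restrict y F))" for y
  proof
    assume h: "\<forall>p. card (fibre v (z(k := y)) (Suc k) p) = m"
    show "\<forall>F\<in>FF. P F (restrict y F)"
    proof
      fix F assume "F \<in> FF"
      then obtain p where F: "F = fibre v z k p" unfolding FF_def by blast
      have "card (fibre v (z(k := y)) (Suc k) (p(k := u))) = m" for u using h by blast
      moreover have "fibre v (z(k := y)) (Suc k) (p(k := u)) = {t\<in>F. y t = u}" for u
        unfolding fibre_upd_Suc F using fibre_cong[of k "p(k := u)" p] by simp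
      ultimately show "P F (restrict y F)" unfolding P_restrict by simp
    qed
  next
    assume h: "\<forall>F\<in>FF. P F (restrict y F)"
    show "\<forall>p. card (fibre v (z(k := y)) (Suc k) p) = m"
    proof
      fix p
      have "fibre v z k p \<in> FF" unfolding FF_def by blast
      then have "\<forall>u. card {t \<in> fibre v z k p. y t = u} = m" using h P_restrict by blast
      then show "card (fibre v (z(k := y)) (Suc k) p) = m" unfolding fibre_upd_Suc by blast
    qed
  qed
  then have "card {y \<in> vecs v. \<forall>p. card (fibre v (z(k := y)) (Suc k) p) = m}
      = card {y \<in> vecs v. \<forall>F\<in>FF. P F (restrict y F)}" by simp
  also have "\<dots> = (\<Prod>F\<in>FF. card {g \<in> F \<rightarrow>\<^sub>E UNIV. P F g})"
    unfolding FF_def using fibres_partition by (rule card_vecs_blockwise)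
  also have "\<dots> = (\<Prod>F\<in>FF. ((3 * m) choose m) * ((2 * m) choose m))"
    unfolding FF_def P_def using fib finite_fibre
    by (intro prod.cong refl card_balanced_gf3_maps) auto
  finally show ?thesis unfolding FF_def by simp
qed

(* Entries from index k on are normalised to 0, which makes these sets of frames finite;
   the same convention is used for basis_extensions below. *)
definition even_frames :: "nat \<Rightarrow> (nat \<Rightarrow> gf3vec) \<Rightarrow> nat \<Rightarrow> nat \<Rightarrow> (nat \<Rightarrow> gf3vec) set" where
  "even_frames v x i k = {z. (\<forall>l<i. z l = x l) \<and> (\<forall>l\<ge>k. z l = (\<lambda>_. 0)) \<and>
     (\<forall>l. i \<le> l \<and> l < k \<longrightarrow> z l \<in> vecs v) \<and> (\<forall>p. card (fibre v z k p) = v div 3 ^ k)}"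

lemma div_power3_Suc:
  assumes "3 ^ Suc k dvd (v::nat)"
  shows "v div 3 ^ k = 3 * (v div 3 ^ Suc k)"
proof -
  obtain q where "v = 3 ^ k * (3 * q)" using assms by (auto simp: mult.assoc)
  then show ?thesis by (simp add: mult.assoc)
qed

lemma card_range_fibre_power3:
  assumes dvd: "3 ^ k dvd v" and v: "0 < v" and fib: "\<And>p. card (fibre v z k p) = v div 3 ^ k"
  shows "card (range (fibre v z k)) = 3 ^ k"
proof -
  have v_k: "v div 3 ^ k * 3 ^ k = v" using dvd by simp
  have "card (range (fibre v z k)) * (v div 3 ^ k) = 3 ^ k * (v div 3 ^ k)"
    using card_range_fibre[OF fib] v_k by (simp add: mult.commute)
  moreover have "v div 3 ^ k \<noteq> 0"
  proof
    assume "v div 3 ^ k = 0"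
    then show False using v_k v by simp
  qed
  ultimately show ?thesis by simp
qed

lemma even_frames_base:
  assumes "\<forall>l\<ge>i. x l = (\<lambda>_. 0)" "\<forall>p. card (fibre v x i p) = v div 3 ^ i"
  shows "even_frames v x i i = {x}"
proof -
  have "z = x" if "\<forall>l<i. z l = x l" "\<forall>l\<ge>i. z l = (\<lambda>_. 0)" for z
    using that assms(1) by (metis ext not_le)
  then show ?thesis using assms unfolding even_frames_def by auto
qed

lemma even_frames_Suc:
  assumes "i \<le> k" and dvd: "3 ^ Suc k dvd v"
  shows "even_frames v x i (Suc k) = {z(k := y) | z y. z \<in> even_frames v x i k \<and>
    y \<in> {y \<in> vecs v. \<forall>p. card (fibre v (z(k := y)) (Suc k) p) = v div 3 ^ Suc k}}"
    (is "_ = ?ext")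
proof (intro equalityI subsetI)
  fix z' assume z': "z' \<in> even_frames v x i (Suc k)"
  define z where "z = z'(k := (\<lambda>_. 0))"
  have "card (fibre v z k p) = v div 3 ^ k" for p
  proof -
    have "fibre v z k p = fibre v z' k p" by (rule fibre_frame_cong) (simp add: z_def)
    then have "card (fibre v z k p) = card (fibre v z' k p)" by simp
    also have "\<dots> = (\<Sum>u\<in>(UNIV :: 3 set). card (fibre v z' (Suc k) (p(k := u))))"
      by (rule card_fibre_split)
    also have "\<dots> = 3 * (v div 3 ^ Suc k)" using z' unfolding even_frames_def by simp
    finally show ?thesis using div_power3_Suc[OF dvd] by simp
  qed
  then have "z \<in> even_frames v x i k"
    using z' \<open>i \<le> k\<close> unfolding even_frames_def z_def by auto
  moreover have z'_eq: "z' = z(k := z' k)" unfolding z_def by simp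
  moreover have "z' k \<in> vecs v \<and> (\<forall>p. card (fibre v (z(k := z' k)) (Suc k) p) = v div 3 ^ Suc k)"
    using z' \<open>i \<le> k\<close> unfolding even_frames_def by (auto simp flip: z'_eq)
  ultimately show "z' \<in> ?ext" by blast
next
  fix z' assume "z' \<in> ?ext"
  then show "z' \<in> even_frames v x i (Suc k)"
    using \<open>i \<le> k\<close> unfolding even_frames_def by (auto simp: less_Suc_eq)
qed

lemma card_even_frames:
  assumes dvd: "3 ^ j dvd v" and v: "0 < v"
    and x: "\<forall>l\<ge>i. x l = (\<lambda>_. 0)" "\<forall>p. card (fibre v x i p) = v div 3 ^ i"
    and "i \<le> k" "k \<le> j"
  shows "finite (even_frames v x i k) \<and>
    real (card (even_frames v x i k)) = fact (v div 3 ^ i) ^ 3 ^ i / fact (v div 3 ^ k) ^ 3 ^ k"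
  using \<open>i \<le> k\<close> \<open>k \<le> j\<close>
proof (induction k rule: dec_induct)
  case base
  show ?case using even_frames_base[OF x] by simp
next
  case (step k)
  define m where "m = v div 3 ^ Suc k"
  have IH: "finite (even_frames v x i k)"
    "real (card (even_frames v x i k)) = fact (v div 3 ^ i) ^ 3 ^ i / fact (v div 3 ^ k) ^ 3 ^ k"
    using step by simp_all
  have dvd_Suc: "3 ^ Suc k dvd v" using dvd step by (meson le_imp_power_dvd dvd_trans)
  then have mk: "v div 3 ^ k = 3 * m" unfolding m_def by (rule div_power3_Suc)
  define c where "c = ((3 * m) choose m) * ((2 * m) choose m)"
  define G where "G z = {y \<in> vecs v. \<forall>p. card (fibre v (z(k := y)) (Suc k) p) = m}" for z
  have card_G: "card (G z) = c ^ 3 ^ k" if z: "z \<in> even_frames v x i k" for z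
  proof -
    have fib: "card (fibre v z k p) = v div 3 ^ k" for p using z unfolding even_frames_def by simp
    have "3 ^ k dvd v" by (rule dvd_trans[OF le_imp_power_dvd dvd_Suc]) simp
    then have "card (range (fibre v z k)) = 3 ^ k" by (rule card_range_fibre_power3[OF _ v fib])
    moreover have fib3: "card (fibre v z k p) = 3 * m" for p using fib mk by simp
    ultimately show ?thesis unfolding G_def c_def using card_even_refinements[OF fib3] by simp
  qed
  have "0 < c" unfolding c_def by simp
  then have fin_G: "finite (G z)" if "z \<in> even_frames v x i k" for z
    using card_G[OF that] by (intro card_ge_0_finite) simp
  have zero: "z k = (\<lambda>_. 0)" if "z \<in> even_frames v x i k" for z
    using that unfolding even_frames_def by simp
  have eq: "even_frames v x i (Suc k) = {z(k := y) | z y. z \<in> even_frames v x i k \<and> y \<in> G z}"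
    unfolding G_def m_def using even_frames_Suc[OF step(1) dvd_Suc] by simp
  have ext: "finite (even_frames v x i (Suc k))"
    "card (even_frames v x i (Suc k)) = card (even_frames v x i k) * c ^ 3 ^ k"
    unfolding eq
    using card_fun_upd_extensions[of "even_frames v x i k" k "\<lambda>_. 0" G "c ^ 3 ^ k"]
      IH(1) zero fin_G card_G by blast+
  have "real c = fact (v div 3 ^ k) / fact m ^ 3" unfolding c_def mk by (rule real_choose_mult_choose)
  then have "real (card (even_frames v x i (Suc k)))
      = fact (v div 3 ^ i) ^ 3 ^ i / fact (v div 3 ^ k) ^ 3 ^ k * (fact (v div 3 ^ k) / fact m ^ 3) ^ 3 ^ k"
    using ext(2) IH(2) by simp
  also have "\<dots> = fact (v div 3 ^ i) ^ 3 ^ i / fact m ^ 3 ^ Suc k"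
    by (simp add: power_divide power_mult[symmetric] mult.commute)
  finally show ?case using ext(1) unfolding m_def by simp
qed

definition basis_extensions ::
  "nat \<Rightarrow> (nat \<Rightarrow> gf3vec) \<Rightarrow> nat \<Rightarrow> gf3vec set \<Rightarrow> nat \<Rightarrow> (nat \<Rightarrow> gf3vec) set" where
  "basis_extensions v x i E k = {z. (\<forall>l<i. z l = x l) \<and> (\<forall>l\<ge>k. z l = (\<lambda>_. 0)) \<and>
     (\<forall>l. i \<le> l \<and> l < k \<longrightarrow> z l \<in> E \<and> z l \<notin> frame_span v z l)}"

lemma basis_extensions_frame_indep:
  assumes x: "frame_indep v x i" and z: "z \<in> basis_extensions v x i E k"
  shows "frame_indep v z k"
  unfolding frame_indep_def
proof (intro allI impI)
  fix l assume "l < k"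
  have zx: "\<forall>l<i. z l = x l" using z unfolding basis_extensions_def by blast
  show "z l \<notin> frame_span v z l"
  proof (cases "l < i")
    case True
    have "frame_span v z l = frame_span v x l" using zx True by (intro frame_span_cong) simp
    then show ?thesis using x zx True unfolding frame_indep_def by simp
  next
    case False
    then show ?thesis using z \<open>l < k\<close> unfolding basis_extensions_def by simp
  qed
qed

lemma basis_extensions_base:
  assumes "\<forall>l\<ge>i. x l = (\<lambda>_. 0)"
  shows "basis_extensions v x i E i = {x}"
proof -
  have "z = x" if "\<forall>l<i. z l = x l" "\<forall>l\<ge>i. z l = (\<lambda>_. 0)" for z
    using that assms by (metis ext not_le)
  then show ?thesis using assms unfolding basis_extensions_def by auto
qed

lemma basis_extensions_Suc:
  assumes "i \<le> k"
  shows "basis_extensions v x i E (Suc k)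
    = {z(k := y) | z y. z \<in> basis_extensions v x i E k \<and> y \<in> E - frame_span v z k}"
    (is "_ = ?ext")
proof (intro equalityI subsetI)
  fix z' assume z': "z' \<in> basis_extensions v x i E (Suc k)"
  define z where "z = z'(k := (\<lambda>_. 0))"
  have span: "frame_span v z l = frame_span v z' l" if "l \<le> k" for l
    using that by (intro frame_span_cong) (simp add: z_def)
  have "z \<in> basis_extensions v x i E k"
    using z' \<open>i \<le> k\<close> span unfolding basis_extensions_def z_def by auto
  moreover have "z' = z(k := z' k)" unfolding z_def by simp
  moreover have "z' k \<in> E - frame_span v z k"
    using z' \<open>i \<le> k\<close> span[of k] unfolding basis_extensions_def by auto
  ultimately show "z' \<in> ?ext" by blast
next
  fix z' assume "z' \<in> ?ext"
  then obtain z y where z': "z' = z(k := y)" and z: "z \<in> basis_extensions v x i E k"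
    and y: "y \<in> E" "y \<notin> frame_span v z k" by blast
  have span: "frame_span v z' l = frame_span v z l" if "l \<le> k" for l
    using that by (intro frame_span_cong) (simp add: z')
  show "z' \<in> basis_extensions v x i E (Suc k)"
    using z y \<open>i \<le> k\<close> span unfolding basis_extensions_def z'
    by (auto simp: less_Suc_eq)
qed

lemma card_basis_extensions:
  assumes v: "1 \<le> v" and E: "subspace3 v E" "all_one v \<in> E" "finite E" "card E = 3 ^ Suc j"
    and x: "frame_indep v x i" "\<forall>l\<ge>i. x l = (\<lambda>_. 0)" "\<forall>l<i. x l \<in> E"
    and "i \<le> k" "k \<le> j"
  shows "finite (basis_extensions v x i E k) \<and>
    card (basis_extensions v x i E k) = (\<Prod>l\<in>{i..<k}. 3 ^ Suc j - 3 ^ Suc l)"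
  using \<open>i \<le> k\<close> \<open>k \<le> j\<close>
proof (induction k rule: dec_induct)
  case base
  then show ?case using basis_extensions_base[OF x(2)] by simp
next
  case (step k)
  have IH: "finite (basis_extensions v x i E k)"
    "card (basis_extensions v x i E k) = (\<Prod>l\<in>{i..<k}. 3 ^ Suc j - 3 ^ Suc l)"
    using step by simp_all
  have complement: "finite (E - frame_span v z k) \<and> card (E - frame_span v z k) = 3 ^ Suc j - 3 ^ Suc k"
    if z: "z \<in> basis_extensions v x i E k" for z
  proof -
    have "z l \<in> E" if "l < k" for l
      using z x(3) that unfolding basis_extensions_def by (cases "l < i") auto
    then have "frame_span v z k \<subseteq> E" by (rule frame_span_subset[OF E(1,2)])
    moreover have "card (frame_span v z k) = 3 ^ Suc k"
      using card_frame_span[OF v basis_extensions_frame_indep[OF x(1) z]] .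
    ultimately show ?thesis using E(3,4) by (simp add: card_Diff_subset finite_subset)
  qed
  have zero: "z k = (\<lambda>_. 0)" if "z \<in> basis_extensions v x i E k" for z
    using that unfolding basis_extensions_def by simp
  have "finite (basis_extensions v x i E (Suc k))"
    "card (basis_extensions v x i E (Suc k)) = card (basis_extensions v x i E k) * (3 ^ Suc j - 3 ^ Suc k)"
    unfolding basis_extensions_Suc[OF step(1)]
    using card_fun_upd_extensions[of "basis_extensions v x i E k" k "\<lambda>_. 0"
        "\<lambda>z. E - frame_span v z k" "3 ^ Suc j - 3 ^ Suc k"] IH(1) zero complement by blast+
  then show ?case using IH(2) step(1) by (simp add: prod.atLeastLessThan_Suc)
qed

lemma qfact_Suc: "qfact q (Suc d) = qfact q d * (\<Sum>r<Suc d. q ^ r)"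
  unfolding qfact_def by (simp add: prod.nat_ivl_Suc' mult.commute)

lemma prod_power3_diff:
  "(\<Prod>l\<in>{i..<i + d}. (3::real) ^ Suc (i + d) - 3 ^ Suc l)
    = 3 ^ ((2 * i + d + 1) * d div 2) * 2 ^ d * qfact 3 d"
proof (induction d arbitrary: i)
  case 0
  then show ?case by (simp add: qfact_def)
next
  case (Suc d)
  have geometric: "(3::real) ^ Suc d - 1 = 2 * (\<Sum>r<Suc d. 3 ^ r)"
    by (induction d) (simp_all add: algebra_simps)
  have exponent: "(2 * i + Suc d + 1) * Suc d div 2 = Suc i + (2 * Suc i + d + 1) * d div 2"
  proof -
    have "(2 * i + Suc d + 1) * Suc d = 2 * Suc i + (2 * Suc i + d + 1) * d"
      by (simp add: algebra_simps)
    then show ?thesis by simp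
  qed
  have "(\<Prod>l\<in>{i..<i + Suc d}. (3::real) ^ Suc (i + Suc d) - 3 ^ Suc l)
      = (3 ^ Suc (i + Suc d) - 3 ^ Suc i) * (\<Prod>l\<in>{Suc i..<Suc i + d}. (3::real) ^ Suc (Suc i + d) - 3 ^ Suc l)"
    by (simp add: prod.atLeast_Suc_lessThan)
  also have "\<dots> = (3 ^ Suc i * (3 ^ Suc d - 1)) * (3 ^ ((2 * Suc i + d + 1) * d div 2) * 2 ^ d * qfact 3 d)"
    unfolding Suc.IH by (simp add: algebra_simps power_add)
  also have "\<dots> = 3 ^ ((2 * i + Suc d + 1) * Suc d div 2) * 2 ^ Suc d * qfact 3 (Suc d)"
    unfolding geometric exponent qfact_Suc power_add by simp
  finally show ?case .
qed

lemma real_prod_power3_diff: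
  assumes "i \<le> j"
  shows "real (\<Prod>l\<in>{i..<j}. 3 ^ Suc j - 3 ^ Suc l :: nat)
    = 3 ^ ((j + i + 1) * (j - i) div 2) * 2 ^ (j - i) * qfact 3 (j - i)"
proof -
  obtain d where j: "j = i + d" using assms le_Suc_ex by blast
  have "real (\<Prod>l\<in>{i..<j}. 3 ^ Suc j - 3 ^ Suc l :: nat) = (\<Prod>l\<in>{i..<j}. (3::real) ^ Suc j - 3 ^ Suc l)"
    by (auto intro!: prod.cong power_increasing)
  also have "\<dots> = 3 ^ ((2 * i + d + 1) * d div 2) * 2 ^ d * qfact 3 d"
    unfolding j by (rule prod_power3_diff)
  also have "(2 * i + d + 1) * d = (j + i + 1) * (j - i)" unfolding j by (simp add: algebra_simps)
  finally show ?thesis unfolding j by simp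
qed

lemma finite_vecs: "finite (vecs v)"
proof -
  have "inj_on (\<lambda>x. restrict x {1..v}) (vecs v)"
  proof (rule inj_onI, rule ext)
    fix x y t assume "x \<in> vecs v" "y \<in> vecs v" "restrict x {1..v} = restrict y {1..v}"
    then show "x t = y t" unfolding vecs_def by (cases "t \<in> {1..v}") (auto dest: fun_cong[of _ _ t])
  qed
  moreover have "(\<lambda>x. restrict x {1..v}) ` vecs v \<subseteq> {1..v} \<rightarrow>\<^sub>E (UNIV :: 3 set)" by auto
  then have "finite ((\<lambda>x. restrict x {1..v}) ` vecs v)" by (rule finite_subset) (simp add: finite_PiE)
  ultimately show ?thesis using finite_imageD by blast
qed

lemma eq_div_power3: "a * 3 ^ k = (v::nat) \<Longrightarrow> a = v div 3 ^ k"
  by (metis nonzero_mult_div_cancel_right power_not_zero zero_neq_numeral)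

lemma Dset_subspace:
  assumes "E \<in> Dset v j"
  shows "subspace3 v E" "all_one v \<in> E" "finite E" "card E = 3 ^ Suc j"
proof -
  have E: "subspace_dim v E (Suc j)" "all_one v \<in> E" using assms unfolding Dset_def by auto
  then show "subspace3 v E" "all_one v \<in> E" unfolding subspace_dim_def by blast+
  show "finite E" "card E = 3 ^ Suc j" using subspace_dim_card[OF E(1)] by blast+
qed

lemma Dset_frame:
  assumes v: "1 \<le> v" and E: "E \<in> Dset v j"
  obtains z where "frame_indep v z j" "\<forall>l\<ge>j. z l = (\<lambda>_. 0)" "\<forall>l<j. z l \<in> E"
    "frame_span v z j = E"
  using frame_of_subspace[OF v Dset_subspace[OF E]] by blast

lemma card_fibre_Dset:
  assumes v: "1 \<le> v" and E: "E \<in> Dset v j" and z: "frame_indep v z j" "\<forall>l<j. z l \<in> E"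
    and "k \<le> j"
  shows "card (fibre v z k p) * 3 ^ k = v"
proof -
  obtain S where S: "is_STS v S" "\<forall>w\<in>E. \<forall>B\<in>S. orth v w (char_vec B)"
    using E unfolding Dset_def by blast
  have "z l \<in> vecs v" if "l < j" for l
    using z(2) that Dset_subspace(1)[OF E] unfolding subspace3_def by blast
  then have "frame_lin_indep v z j" by (rule frame_indep_imp_lin_indep[OF v _ z(1)])
  moreover have "\<forall>l<j. \<forall>B\<in>S. orth v (z l) (char_vec B)" using S(2) z(2) by blast
  ultimately show ?thesis using card_fibre_sts[OF v S(1)] \<open>k \<le> j\<close> by blast
qed

lemma basis_extension_in_even_frames:
  assumes v: "1 \<le> v" and E: "E \<in> Dset v j" and x: "frame_indep v x i" "\<forall>l<i. x l \<in> E"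
    and z: "z \<in> basis_extensions v x i E j"
  shows "z \<in> even_frames v x i j" "frame_span v z j = E"
proof -
  have zE: "z l \<in> E" if "l < j" for l
    using z x(2) that unfolding basis_extensions_def by (cases "l < i") auto
  have indep: "frame_indep v z j" by (rule basis_extensions_frame_indep[OF x(1) z])
  have "frame_span v z j \<subseteq> E" using frame_span_subset[OF Dset_subspace(1,2)[OF E]] zE by blast
  moreover have "card (frame_span v z j) = card E"
    using card_frame_span[OF v indep] Dset_subspace(4)[OF E] by simp
  ultimately show "frame_span v z j = E" using card_subset_eq[OF Dset_subspace(3)[OF E]] by blast
  have "card (fibre v z j p) = v div 3 ^ j" for p
    using card_fibre_Dset[OF v E indep _ order_refl] zE by (intro eq_div_power3) blast
  moreover have "z l \<in> vecs v" if "l < j" for l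
    using zE[OF that] Dset_subspace(1)[OF E] unfolding subspace3_def by blast
  ultimately show "z \<in> even_frames v x i j" using z unfolding basis_extensions_def even_frames_def by auto
qed

lemma even_frame_span_in_Dset:
  assumes v: "1 \<le> v" and E0: "E0 \<in> Dset v j" and x: "\<forall>l<i. x l \<in> vecs v" and "i \<le> j"
    and z: "z \<in> even_frames v x i j"
  shows "frame_span v z j \<in> Dset v j" "z \<in> basis_extensions v x i (frame_span v z j) j"
    "frame_span v x i \<subseteq> frame_span v z j"
proof -
  obtain z0 where z0: "frame_indep v z0 j" "\<forall>l<j. z0 l \<in> E0" "frame_span v z0 j = E0"
    using Dset_frame[OF v E0] by blast
  have card_z0: "card (fibre v z0 j p) * 3 ^ j = v" for p
    by (rule card_fibre_Dset[OF v E0 z0(1,2) order_refl])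
  have card_z: "card (fibre v z j p) = v div 3 ^ j" for p
    using z unfolding even_frames_def by blast
  have card_eq: "card (fibre v z0 j p) = card (fibre v z j p)" for p
    using eq_div_power3[OF card_z0] card_z by simp
  have "fibre v z j p \<noteq> {}" for p
  proof
    assume "fibre v z j p = {}"
    then have "v = 0" using card_z0[of p] card_eq[of p] by simp
    then show False using v by simp
  qed
  then have lin: "frame_lin_indep v z j" by (rule nonempty_fibres_imp_frame_lin_indep)
  then have indep: "frame_indep v z j" by (rule frame_lin_indep_imp_indep)
  have vecs: "z l \<in> vecs v" if "l < j" for l
    using z x \<open>i \<le> j\<close> that unfolding even_frames_def by (cases "l < i") auto
  obtain S0 where S0: "is_STS v S0" "\<forall>w\<in>E0. \<forall>B\<in>S0. orth v w (char_vec B)"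
    using E0 unfolding Dset_def by blast
  from card_eq obtain S where "is_STS v S" "\<forall>w\<in>frame_span v z j. \<forall>B\<in>S. orth v w (char_vec B)"
    using sts_orth_transport[OF S0(1)] S0(2) z0(3) by metis
  then show "frame_span v z j \<in> Dset v j"
    using subspace_dim_frame_span[OF vecs lin] all_one_in_frame_span unfolding Dset_def by auto
  show "z \<in> basis_extensions v x i (frame_span v z j) j"
    using z indep frame_in_frame_span unfolding even_frames_def basis_extensions_def frame_indep_def
    by auto
  have "frame_span v x i = frame_span v z i"
    using z unfolding even_frames_def by (intro frame_span_cong) simp
  then show "frame_span v x i \<subseteq> frame_span v z j" using frame_span_mono[OF \<open>i \<le> j\<close>] by simp
qed

lemma card_Dset_supersets_mult:
  assumes v: "1 \<le> v" and "i \<le> j" and E0: "E0 \<in> Dset v j"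
    and x: "frame_indep v x i" "\<forall>l\<ge>i. x l = (\<lambda>_. 0)" "\<forall>l<i. x l \<in> D" "frame_span v x i = D"
    and D: "D \<in> Dset v i"
  shows "card {E \<in> Dset v j. D \<subseteq> E} * (\<Prod>l\<in>{i..<j}. 3 ^ Suc j - 3 ^ Suc l)
    = card (even_frames v x i j)"
proof -
  define Es where "Es = {E \<in> Dset v j. D \<subseteq> E}"
  define P where "P = Sigma Es (\<lambda>E. basis_extensions v x i E j)"
  have x_vecs: "\<forall>l<i. x l \<in> vecs v" using x(3) Dset_subspace(1)[OF D] unfolding subspace3_def by blast
  have "Es \<subseteq> Pow (vecs v)" unfolding Es_def using Dset_subspace(1) unfolding subspace3_def by blast
  then have "finite Es" using finite_vecs by (meson finite_Pow_iff finite_subset)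
  moreover have "finite (basis_extensions v x i E j) \<and>
      card (basis_extensions v x i E j) = (\<Prod>l\<in>{i..<j}. 3 ^ Suc j - 3 ^ Suc l)" if "E \<in> Es" for E
  proof -
    have E: "E \<in> Dset v j" "\<forall>l<i. x l \<in> E" using that x(3) unfolding Es_def by auto
    show ?thesis
      using card_basis_extensions[OF v Dset_subspace[OF E(1)] x(1,2) E(2) \<open>i \<le> j\<close> order_refl] .
  qed
  ultimately have card_P: "card P = card Es * (\<Prod>l\<in>{i..<j}. 3 ^ Suc j - 3 ^ Suc l)"
    unfolding P_def by simp
  have P_even: "z \<in> even_frames v x i j" "frame_span v z j = E" if "(E, z) \<in> P" for E z
  proof -
    have "E \<in> Dset v j" "\<forall>l<i. x l \<in> E" "z \<in> basis_extensions v x i E j"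
      using that x(3) unfolding P_def Es_def by auto
    then show "z \<in> even_frames v x i j" "frame_span v z j = E"
      using basis_extension_in_even_frames[OF v _ x(1)] by blast+
  qed
  have "inj_on snd P" using P_even(2) by (intro inj_onI) (metis prod.collapse)
  moreover have "snd ` P = even_frames v x i j"
  proof (intro equalityI subsetI)
    fix z assume "z \<in> snd ` P"
    then show "z \<in> even_frames v x i j" using P_even(1) by force
  next
    fix z assume z: "z \<in> even_frames v x i j"
    have "(frame_span v z j, z) \<in> P"
      using even_frame_span_in_Dset[OF v E0 x_vecs \<open>i \<le> j\<close> z] unfolding P_def Es_def x(4) by simp
    then show "z \<in> snd ` P" by force
  qed
  ultimately show ?thesis using card_image card_P unfolding Es_def by metis
qed

lemma card_Dset_supersets:
  assumes v: "1 \<le> v" and "i \<le> j" and E0: "E0 \<in> Dset v j" and D: "D \<in> Dset v i"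
  shows "real (card {E \<in> Dset v j. D \<subseteq> E}) = Gamma v i j"
proof -
  obtain x where x: "frame_indep v x i" "\<forall>l\<ge>i. x l = (\<lambda>_. 0)" "\<forall>l<i. x l \<in> D" "frame_span v x i = D"
    using Dset_frame[OF v D] by blast
  obtain z0 where z0: "frame_indep v z0 j" "\<forall>l<j. z0 l \<in> E0"
    using Dset_frame[OF v E0] by blast
  have "3 ^ j dvd v" using card_fibre_Dset[OF v E0 z0 order_refl] by (metis dvd_triv_right)
  moreover have "\<forall>p. card (fibre v x i p) = v div 3 ^ i"
    using eq_div_power3[OF card_fibre_Dset[OF v D x(1,3) order_refl]] by blast
  ultimately have frames: "real (card (even_frames v x i j))
      = fact (v div 3 ^ i) ^ 3 ^ i / fact (v div 3 ^ j) ^ 3 ^ j"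
    using card_even_frames[OF _ _ x(2) _ \<open>i \<le> j\<close> order_refl] v by simp
  define N where "N = (\<Prod>l\<in>{i..<j}. 3 ^ Suc j - 3 ^ Suc l :: nat)"
  have "N \<noteq> 0" unfolding N_def by (simp add: power_strict_increasing)
  moreover have "card {E \<in> Dset v j. D \<subseteq> E} * N = card (even_frames v x i j)"
    using card_Dset_supersets_mult[OF v \<open>i \<le> j\<close> E0 x D] unfolding N_def .
  then have "real (card {E \<in> Dset v j. D \<subseteq> E}) * real N = real (card (even_frames v x i j))"
    by (metis of_nat_mult)
  ultimately have "real (card {E \<in> Dset v j. D \<subseteq> E}) = real (card (even_frames v x i j)) / real N"
    by (simp add: field_simps)
  also have "\<dots> = Gamma v i j"
    unfolding frames N_def real_prod_power3_diff[OF \<open>i \<le> j\<close>] Gamma_def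
    by (simp add: mult_ac)
  finally show ?thesis .
qed

lemma frame_span_0_in_Dset:
  assumes v: "1 \<le> v" and E0: "E0 \<in> Dset v j"
  shows "frame_span v z 0 \<in> Dset v 0"
proof -
  have "frame_lin_indep v z 0" by (rule frame_indep_imp_lin_indep[OF v]) (simp_all add: frame_indep_def)
  then have "subspace_dim v (frame_span v z 0) (Suc 0)" by (intro subspace_dim_frame_span) simp
  moreover have "frame_span v z 0 \<subseteq> E0"
    using frame_span_subset[OF Dset_subspace(1,2)[OF E0]] by simp
  moreover obtain S where "is_STS v S" "\<forall>w\<in>E0. \<forall>B\<in>S. orth v w (char_vec B)"
    using E0 unfolding Dset_def by blast
  ultimately show ?thesis
    unfolding Dset_def using all_one_in_frame_span by (intro CollectI conjI exI[of _ S]) auto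
qed

theorem lemma3:
  fixes v i j :: nat
  assumes "v mod 6 = 1 \<or> v mod 6 = 3"
    and "i \<le> j"
    and "Dset v j \<noteq> {}"
  shows "(\<forall>D\<in>Dset v i. real (card {E\<in>Dset v j. D \<subseteq> E}) = Gamma v i j)
         \<and> real (card (Dset v j)) = Gamma v 0 j"
proof -
  (* The congruence on v matters only for the existence of Steiner triple systems, which
     Dset v j \<noteq> {} already provides; here it just excludes v = 0. *)
  have v: "1 \<le> v" using assms(1) by (cases v) auto
  obtain E0 where E0: "E0 \<in> Dset v j" using assms(3) by blast
  define C where "C = frame_span v (\<lambda>_ _. 0) 0"
  have "C \<in> Dset v 0" unfolding C_def by (rule frame_span_0_in_Dset[OF v E0])
  moreover have "C \<subseteq> E" if "E \<in> Dset v j" for E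
    unfolding C_def using frame_span_subset[OF Dset_subspace(1,2)[OF that]] by simp
  then have "{E \<in> Dset v j. C \<subseteq> E} = Dset v j" by blast
  ultimately show ?thesis using card_Dset_supersets[OF v _ E0] assms(2) by fastforce
qed

end
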